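(* There are absolute constants $c_1,c_2,C>0$ such that the following holds. Let $M\in\mathbb{N}$, $N_0>0$, let ${\bf C}_{{\bf h}}\in\mathbb{C}^{M\times M}$ be Hermitian positive semidefinite, and set ${\bf C}_{{\bf y}}={\bf C}_{{\bf h}}+N_0\mathbf{I}_M$ and ${\bf C}_{{\bf r}}=\mathcal{P}_{\mathrm{arcsine}}({\bf C}_{{\bf y}})$. Let $\theta\in(0,1)$ and assume $$\left|\left[{\rm diag}({\bf C}_{{\bf y}})^{-1/2}{\bf C}_{{\bf y}}\,{\rm diag}({\bf C}_{{\bf y}})^{-1/2}\right]_{i,j}\right|\le 1-\theta\quad\text{for all } i\neq j,$$ $$\min_{i\in[M]}|[{\bf C}_{{\bf y}}]_{i,i}|\ge\theta,\qquad \lambda_{\min}({\bf C}_{{\bf r}})\ge\theta .$$ Let $\widehat{{\bf C}}_{{\bf y}}\in\mathbb{C}^{M\times M}$ be Hermitian and let $\varepsilon_{\sf F},\varepsilon_\infty>0$ satisfy $\|\widehat{{\bf C}}_{{\bf y}}-{\bf C}_{{\bf y}}\|_{\sf F}<\varepsilon_{\sf F}$, $\|\widehat{{\bf C}}_{{\bf y}}-{\bf C}_{{\bf y}}\|_{\infty}<\varepsilon_\infty$, and $$\varepsilon_\infty\le c_1\min\left\{\frac{\varepsilon_{\sf F}}{\|{\bf C}_{{\bf y}}\|_{\sf F}},\ \frac{\theta^3}{\|{\bf C}_{{\bf y}}\|_\infty},\ \theta,\ 1\right\},\qquad \varepsilon_{\sf F}\le c_2\min\left\{\theta^4,\ \frac{\theta^6\|{\bf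 C}_{{\bf h}}\|_{\sf F}}{\max\{1,\|{\bf C}_{{\bf h}}\|\}\,\|{\bf C}_{{\bf y}}\|}\right\}.$$ Then the quantities $\widehat{{\bf A}}$, $\widehat{{\bf C}}_{{\bf r}}^{-1}$ below are well defined, and for any random vector ${\bf r}\in\mathbb{C}^M$ with $\mathbb{E}[{\bf r}{\bf r}^{\sf H}]={\bf C}_{{\bf r}}$, $$\mathbb{E}\left[\|\widehat{{\bf h}}-\widehat{{\bf h}}^{\rm BLM}\|_2^2\right]\le C\,\theta^{-6}\max\{1,\|{\bf C}_{{\bf h}}\|\}\,\|{\bf C}_{{\bf h}}\|_{\sf F}\,\varepsilon_{\sf F},$$ where the expectation is with respect to ${\bf r}$ and $$\widehat{{\bf h}}^{\rm BLM}={\bf C}_{{\bf h}}{\bf A}^{\sf H}{\bf C}_{{\bf r}}^{-1}{\bf r},\qquad \widehat{{\bf h}}=\widehat{{\bf C}}_{{\bf h}}\widehat{{\bf A}}^{\sf H}\widehat{{\bf C}}_{{\bf r}}^{-1}{\bf r},$$ with ${\bf A}=\sqrt{2/\pi}\,{\rm diag}({\bf C}_{{\bf y}})^{-1/2}$, $\widehat{{\bf C}}_{{\bf h}}=\widehat{{\bf C}}_{{\bf y}}-N_0\mathbf{I}_M$, $\widehat{{\bf A}}=\sqrt{2/\pi}\,{\rm diag}(\widehat{{\bf C}}_{{\bf y}})^{-1/2}$, $\widehat{{\bf C}}_{{\bf r}}=\mathcal{P}_{\mathrm{arcsine}}(\widehat{{\bf C}}_{{\bf y}})$.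
   Context: For a square matrix ${\bf B}$, ${\rm diag}({\bf B})$ is the diagonal matrix with the diagonal of ${\bf B}$. $\|\cdot\|_{\sf F}$ is the Frobenius norm, $\|\cdot\|$ the operator (spectral) norm, $\|\cdot\|_\infty$ the maximum absolute entry, $\lambda_{\min}$ the smallest eigenvalue. For a Hermitian matrix ${\bf B}$ with positive diagonal, with ${\bf D}={\rm diag}({\bf B})$, $$\mathcal{P}_{\mathrm{arcsine}}({\bf B})=\frac{2}{\pi}\Big(\arcsin\big({\bf D}^{-1/2}\,\mathrm{Re}({\bf B})\,{\bf D}^{-1/2}\big)+j\,\arcsin\big({\bf D}^{-1/2}\,\mathrm{Im}({\bf B})\,{\bf D}^{-1/2}\big)\Big),$$ where $\arcsin$ is applied entrywise and $\mathrm{Re},\mathrm{Im}$ are taken entrywise. *)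

theory Defs
  imports "HOL-Probability.Probability" "Jordan_Normal_Form.Schur_Decomposition"
begin

definition hermitian_mat :: "complex mat \<Rightarrow> bool" where
  "hermitian_mat A \<longleftrightarrow> square_mat A \<and> mat_adjoint A = A"

definition psd_mat :: "complex mat \<Rightarrow> bool" where
  "psd_mat A \<longleftrightarrow> hermitian_mat A \<and>
     (\<forall>x \<in> carrier_vec (dim_row A). Re (conjugate x \<bullet> (A *\<^sub>v x)) \<ge> 0)"

definition diag_inv_sqrt :: "complex mat \<Rightarrow> complex mat" where
  "diag_inv_sqrt B = mat (dim_row B) (dim_row B)
     (\<lambda>(i,j). if i = j then complex_of_real (1 / sqrt (Re (B $$ (i,i)))) else 0)"

text \<open>The arcsine map, entrywise:
  2/pi (arcsin(D^-1/2 Re(B) D^-1/2) + j arcsin(D^-1/2 Im(B) D^-1/2)), D = diag(B).\<close>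
definition P_arcsine :: "complex mat \<Rightarrow> complex mat" where
  "P_arcsine B = mat (dim_row B) (dim_row B) (\<lambda>(i,j).
     complex_of_real (2 / pi) *
       (complex_of_real (arcsin (Re (B $$ (i,j)) / (sqrt (Re (B $$ (i,i))) * sqrt (Re (B $$ (j,j)))))) +
        \<i> * complex_of_real (arcsin (Im (B $$ (i,j)) / (sqrt (Re (B $$ (i,i))) * sqrt (Re (B $$ (j,j))))))))"

definition fro_norm :: "complex mat \<Rightarrow> real" where
  "fro_norm A = sqrt (\<Sum>i<dim_row A. \<Sum>j<dim_col A. (cmod (A $$ (i,j)))\<^sup>2)"

definition max_norm :: "complex mat \<Rightarrow> real" where
  "max_norm A = Max (insert 0 {cmod (A $$ (i,j)) | i j. i < dim_row A \<and> j < dim_col A})"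

definition vec_norm :: "complex vec \<Rightarrow> real" where
  "vec_norm v = sqrt (\<Sum>i<dim_vec v. (cmod (v $ i))\<^sup>2)"

definition op_norm :: "complex mat \<Rightarrow> real" where
  "op_norm A = Sup {vec_norm (A *\<^sub>v x) | x. x \<in> carrier_vec (dim_col A) \<and> vec_norm x \<le> 1}"

text \<open>Smallest eigenvalue of a Hermitian matrix (its eigenvalues are real).\<close>
definition lambda_min :: "complex mat \<Rightarrow> real" where
  "lambda_min A = Min (Re ` {k. eigenvalue A k})"

text \<open>Matrix inverse (meaningful for invertible matrices).\<close>
definition mat_inv :: "complex mat \<Rightarrow> complex mat" where
  "mat_inv A = (SOME B. inverts_mat A B \<and> inverts_mat B A)"

end

theory Submission
  imports Defs
begin

text \<open>As long as the diagonals stay above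
  \<open>\<theta>/2\<close>, normalising an entry by its diagonal is Lipschitz, and arcsine is Lipschitz with
  constant \<open>(\<theta>/2)^(-1/2)\<close> on \<open>[-(1 - \<theta>/2), 1 - \<theta>/2]\<close>; hence the entrywise errors of
  \<open>Cyhat\<close> give \<open>\<parallel>Crhat - Cr\<parallel>\<^sub>F = O(\<epsilon>F \<theta>^(-3))\<close>, and since \<open>Cr \<ge> \<theta> I\<close> this leaves
  \<open>Crhat \<ge> \<theta>/2 I\<close>, so \<open>Crhat\<close> is invertible. The error of the estimator is \<open>(Xhat - X) r\<close>
  with \<open>X = Y Cr\<^sup>-\<^sup>1\<close>, \<open>Xhat = Yhat Crhat\<^sup>-\<^sup>1\<close>, \<open>Y = Ch A\<^sup>H\<close>, \<open>Yhat = Chhat Ahat\<^sup>H\<close>. Its second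
  moment is \<open>\<Sum>\<^sub>k x\<^sub>k\<^sup>H Cr x\<^sub>k\<close> over the conjugated rows \<open>x\<^sub>k\<close> of \<open>Xhat - X\<close>, and the identity
  \<open>(Xhat - X) Crhat = (Yhat - Y) + X (Cr - Crhat)\<close> bounds it by the Frobenius errors of \<open>Y\<close>
  and of \<open>Cr\<close>, the latter weighted by \<open>\<parallel>X\<parallel>\<^sup>2 \<le> \<parallel>Ch\<parallel>\<^sup>2 \<theta>\<^sup>-\<^sup>3\<close>.\<close>

section \<open>Squared norms and quadratic forms\<close>

definition vec_norm_sq :: "complex vec \<Rightarrow> real" where
  "vec_norm_sq x = (\<Sum>i<dim_vec x. (cmod (x$i))\<^sup>2)"

definition fro_norm_sq :: "complex mat \<Rightarrow> real" where
  "fro_norm_sq A = (\<Sum>i<dim_row A. \<Sum>j<dim_col A. (cmod (A$$(i,j)))\<^sup>2)"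

definition sesq_form :: "complex mat \<Rightarrow> complex vec \<Rightarrow> complex vec \<Rightarrow> complex" where
  "sesq_form A x y = (\<Sum>i<dim_vec x. \<Sum>j<dim_vec x. cnj (x$i) * A$$(i,j) * y$j)"

definition quad_form :: "complex mat \<Rightarrow> complex vec \<Rightarrow> complex" where
  "quad_form A x = sesq_form A x x"

lemma vec_norm_sq_nonneg[simp]: "0 \<le> vec_norm_sq x"
  unfolding vec_norm_sq_def by (intro sum_nonneg) auto

lemma fro_norm_sq_nonneg[simp]: "0 \<le> fro_norm_sq A"
  unfolding fro_norm_sq_def by (intro sum_nonneg) auto

lemma vec_norm_eq_sqrt: "vec_norm x = sqrt (vec_norm_sq x)"
  unfolding vec_norm_def vec_norm_sq_def ..

lemma fro_norm_eq_sqrt: "fro_norm A = sqrt (fro_norm_sq A)"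
  unfolding fro_norm_def fro_norm_sq_def ..

lemma mult_mat_vec_index_sum:
  assumes "A \<in> carrier_mat m n" "x \<in> carrier_vec n" "i < m"
  shows "(A *\<^sub>v x)$i = (\<Sum>j<n. A$$(i,j) * x$j)"
  using assms by (auto simp: scalar_prod_def atLeast0LessThan intro!: sum.cong)

lemma mult_mat_index_sum:
  assumes "A \<in> carrier_mat m l" "B \<in> carrier_mat l n" "i < m" "j < n"
  shows "(A * B)$$(i,j) = (\<Sum>k<l. A$$(i,k) * B$$(k,j))"
  using assms by (auto simp: scalar_prod_def atLeast0LessThan intro!: sum.cong)

lemma cmod_sum_mult_sq_le:
  "(cmod (\<Sum>j\<in>J. a j * b j))\<^sup>2 \<le> (\<Sum>j\<in>J. (cmod (a j))\<^sup>2) * (\<Sum>j\<in>J. (cmod (b j))\<^sup>2)"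
proof -
  have "cmod (\<Sum>j\<in>J. a j * b j) \<le> (\<Sum>j\<in>J. cmod (a j) * cmod (b j))"
    by (metis (no_types, lifting) norm_mult norm_sum sum.cong)
  hence "(cmod (\<Sum>j\<in>J. a j * b j))\<^sup>2 \<le> (\<Sum>j\<in>J. cmod (a j) * cmod (b j))\<^sup>2"
    by (intro power_mono) auto
  also have "\<dots> \<le> (\<Sum>j\<in>J. (cmod (a j))\<^sup>2) * (\<Sum>j\<in>J. (cmod (b j))\<^sup>2)"
    by (rule Cauchy_Schwarz_ineq_sum)
  finally show ?thesis .
qed

lemma cmod_sum_cnj_mult_sq_le:
  assumes "x \<in> carrier_vec n" "y \<in> carrier_vec n"
  shows "(cmod (\<Sum>i<n. cnj (x$i) * y$i))\<^sup>2 \<le> vec_norm_sq x * vec_norm_sq y"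
  using cmod_sum_mult_sq_le[of "\<lambda>i. cnj (x$i)" "\<lambda>i. y$i" "{..<n}"] assms
  unfolding vec_norm_sq_def by simp

lemma vec_norm_sq_mult_mat_vec_le:
  assumes A: "A \<in> carrier_mat m n" and x: "x \<in> carrier_vec n"
  shows "vec_norm_sq (A *\<^sub>v x) \<le> fro_norm_sq A * vec_norm_sq x"
proof -
  have "vec_norm_sq (A *\<^sub>v x) = (\<Sum>i<m. (cmod (\<Sum>j<n. A$$(i,j) * x$j))\<^sup>2)"
    unfolding vec_norm_sq_def using A x
    by (intro sum.cong) (auto simp: mult_mat_vec_def scalar_prod_def atLeast0LessThan)
  also have "\<dots> \<le> (\<Sum>i<m. (\<Sum>j<n. (cmod (A$$(i,j)))\<^sup>2) * (\<Sum>j<n. (cmod (x$j))\<^sup>2))"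
    by (intro sum_mono cmod_sum_mult_sq_le)
  also have "\<dots> = fro_norm_sq A * vec_norm_sq x"
    using A x unfolding fro_norm_sq_def vec_norm_sq_def by (simp add: sum_distrib_right)
  finally show ?thesis .
qed

lemma cmod_add_sq_le: "(cmod (a + b))\<^sup>2 \<le> 2 * (cmod a)\<^sup>2 + 2 * (cmod b)\<^sup>2"
proof -
  have "(cmod (a + b))\<^sup>2 \<le> (cmod a + cmod b)\<^sup>2" by (intro power_mono norm_triangle_ineq) auto
  also have "\<dots> \<le> 2 * (cmod a)\<^sup>2 + 2 * (cmod b)\<^sup>2"
    using sum_squares_bound[of "cmod a" "cmod b"] by (simp add: power2_sum)
  finally show ?thesis .
qed

lemma vec_norm_sq_add_le:
  assumes a: "a \<in> carrier_vec n" and b: "b \<in> carrier_vec n"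
  shows "vec_norm_sq (a + b) \<le> 2 * vec_norm_sq a + 2 * vec_norm_sq b"
proof -
  have "vec_norm_sq (a + b) = (\<Sum>i<n. (cmod (a$i + b$i))\<^sup>2)"
    unfolding vec_norm_sq_def using a b by simp
  also have "\<dots> \<le> (\<Sum>i<n. 2 * (cmod (a$i))\<^sup>2 + 2 * (cmod (b$i))\<^sup>2)"
    by (intro sum_mono cmod_add_sq_le)
  also have "\<dots> = 2 * vec_norm_sq a + 2 * vec_norm_sq b"
    unfolding vec_norm_sq_def using a b by (simp add: sum.distrib sum_distrib_left)
  finally show ?thesis .
qed

lemma vec_norm_sq_eq_0_imp:
  assumes x: "x \<in> carrier_vec n" and z: "vec_norm_sq x = 0" shows "x = 0\<^sub>v n"
proof -
  have "\<forall>i\<in>{..<n}. (cmod (x$i))\<^sup>2 = 0"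
    using z x unfolding vec_norm_sq_def by (subst sum_nonneg_eq_0_iff[symmetric]) auto
  thus ?thesis using x by (intro eq_vecI) auto
qed

lemma vec_norm_sq_smult: "vec_norm_sq (c \<cdot>\<^sub>v x) = (cmod c)\<^sup>2 * vec_norm_sq x"
  unfolding vec_norm_sq_def by (simp add: sum_distrib_left norm_mult power_mult_distrib)

lemma vec_norm_sq_ge_entry:
  assumes "x \<in> carrier_vec n" "i < n" shows "(cmod (x$i))\<^sup>2 \<le> vec_norm_sq x"
  unfolding vec_norm_sq_def using assms by (intro member_le_sum) auto

lemma fro_norm_sq_ge_entry:
  assumes "A \<in> carrier_mat m n" "i < m" "j < n" shows "(cmod (A$$(i,j)))\<^sup>2 \<le> fro_norm_sq A"
proof -
  have "(cmod (A$$(i,j)))\<^sup>2 \<le> (\<Sum>j<n. (cmod (A$$(i,j)))\<^sup>2)"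
    using assms by (intro member_le_sum) auto
  also have "\<dots> \<le> (\<Sum>i<m. \<Sum>j<n. (cmod (A$$(i,j)))\<^sup>2)"
    using assms by (intro member_le_sum[of _ _ "\<lambda>i. (\<Sum>j<n. (cmod (A$$(i,j)))\<^sup>2)"])
      (auto intro: sum_nonneg)
  finally show ?thesis unfolding fro_norm_sq_def using assms by simp
qed

lemma quad_form_eq_sum_mult_mat_vec:
  assumes A: "A \<in> carrier_mat n n" and x: "x \<in> carrier_vec n"
  shows "quad_form A x = (\<Sum>i<n. cnj (x$i) * (A *\<^sub>v x)$i)"
  unfolding quad_form_def sesq_form_def using A x
  by (auto simp: mult_mat_vec_def scalar_prod_def atLeast0LessThan sum_distrib_left mult.assoc
      intro!: sum.cong)

lemma cmod_quad_form_sq_le_image: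
  assumes A: "A \<in> carrier_mat n n" and x: "x \<in> carrier_vec n"
  shows "(cmod (quad_form A x))\<^sup>2 \<le> vec_norm_sq x * vec_norm_sq (A *\<^sub>v x)"
  unfolding quad_form_eq_sum_mult_mat_vec[OF A x]
  by (rule cmod_sum_cnj_mult_sq_le[OF x]) (use A x in auto)

lemma cmod_quad_form_le:
  assumes K: "K \<in> carrier_mat n n" and y: "y \<in> carrier_vec n"
  shows "cmod (quad_form K y) \<le> sqrt (fro_norm_sq K) * vec_norm_sq y"
proof -
  have "(cmod (quad_form K y))\<^sup>2 \<le> vec_norm_sq y * (fro_norm_sq K * vec_norm_sq y)"
    using cmod_quad_form_sq_le_image[OF K y] vec_norm_sq_mult_mat_vec_le[OF K y]
    by (meson mult_left_mono order_trans vec_norm_sq_nonneg)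
  hence "cmod (quad_form K y) \<le> sqrt (vec_norm_sq y * (fro_norm_sq K * vec_norm_sq y))"
    by (simp add: real_le_rsqrt)
  also have "\<dots> = sqrt (fro_norm_sq K) * vec_norm_sq y"
    by (simp add: real_sqrt_mult power2_eq_square[symmetric])
  finally show ?thesis .
qed

lemma quad_form_add_scaled:
  assumes x: "x \<in> carrier_vec n" and y: "y \<in> carrier_vec n"
  shows "quad_form K (x + complex_of_real t \<cdot>\<^sub>v y) =
    quad_form K x + of_real t * sesq_form K x y + of_real t * sesq_form K y x
      + of_real (t^2) * quad_form K y"
proof -
  have "quad_form K (x + complex_of_real t \<cdot>\<^sub>v y) =
    (\<Sum>i<n. \<Sum>j<n. (cnj (x$i) + of_real t * cnj (y$i)) * K$$(i,j) * (x$j + of_real t * y$j))"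
    unfolding quad_form_def sesq_form_def using x y by (auto intro!: sum.cong)
  also have "\<dots> = (\<Sum>i<n. \<Sum>j<n. cnj (x$i) * K$$(i,j) * x$j
      + of_real t * (cnj (x$i) * K$$(i,j) * y$j) + of_real t * (cnj (y$i) * K$$(i,j) * x$j)
      + of_real (t^2) * (cnj (y$i) * K$$(i,j) * y$j))"
    by (intro sum.cong refl) (simp add: algebra_simps power2_eq_square)
  also have "\<dots> = quad_form K x + of_real t * sesq_form K x y + of_real t * sesq_form K y x
      + of_real (t^2) * quad_form K y"
    unfolding quad_form_def sesq_form_def using x y by (simp add: sum.distrib sum_distrib_left)
  finally show ?thesis .
qed

lemma quad_form_smult:
  assumes x: "x \<in> carrier_vec n"
  shows "quad_form K (c \<cdot>\<^sub>v x) = cnj c * c * quad_form K x"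
  unfolding quad_form_def sesq_form_def using x by (simp add: sum_distrib_left mult_ac)

lemma quad_form_minus_mat:
  assumes A: "A \<in> carrier_mat n n" and B: "B \<in> carrier_mat n n" and x: "x \<in> carrier_vec n"
  shows "quad_form (A - B) x = quad_form A x - quad_form B x"
  unfolding quad_form_def sesq_form_def using A B x
  by (simp add: sum_subtractf[symmetric] algebra_simps)

lemma cnj_mult_self: "cnj z * z = complex_of_real ((cmod z)\<^sup>2)"
  by (metis complex_norm_square mult.commute)

lemma sesq_form_mult_mat_vec_self:
  assumes K: "K \<in> carrier_mat n n" and x: "x \<in> carrier_vec n"
  shows "sesq_form K (K *\<^sub>v x) x = of_real (vec_norm_sq (K *\<^sub>v x))"
proof -
  have "sesq_form K (K *\<^sub>v x) x = (\<Sum>i<n. cnj ((K *\<^sub>v x)$i) * (K *\<^sub>v x)$i)"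
    unfolding sesq_form_def using K x
    by (auto simp: mult_mat_vec_def scalar_prod_def atLeast0LessThan sum_distrib_left mult.assoc
      intro!: sum.cong)
  also have "\<dots> = of_real (vec_norm_sq (K *\<^sub>v x))"
    unfolding vec_norm_sq_def cnj_mult_self using K by simp
  finally show ?thesis .
qed

lemma discriminant_le_if_quadratic_nonneg:
  fixes a b c :: real
  assumes c: "0 \<le> c" and H: "\<And>t. 0 \<le> a + 2*b*t + c*t^2"
  shows "b^2 \<le> a * c"
proof (cases "c = 0")
  case True
  have "b = 0"
  proof (rule ccontr)
    assume b: "b \<noteq> 0"
    have "0 \<le> a + 2*b*(-(\<bar>a\<bar>+1)/(2*b)) + c*(-(\<bar>a\<bar>+1)/(2*b))^2" by (rule H)
    also have "\<dots> = a - (\<bar>a\<bar>+1)" using b True by (simp add: field_simps)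
    finally show False by linarith
  qed
  thus ?thesis using True by simp
next
  case False
  hence cp: "c > 0" using c by simp
  have "0 \<le> a + 2*b*(-b/c) + c*(-b/c)^2" by (rule H)
  also have "\<dots> = a - b^2/c" using cp by (simp add: field_simps power2_eq_square)
  finally have "b^2/c \<le> a" by simp
  thus ?thesis using cp by (simp add: field_simps)
qed

section \<open>Hermitian matrices bounded below\<close>

lemma mat_adjoint_carrier:
  assumes "A \<in> carrier_mat m n"
  shows "mat_adjoint A \<in> carrier_mat n m"
  using assms unfolding mat_adjoint_def by auto

lemma mat_adjoint_entry:
  assumes A: "A \<in> carrier_mat m n" and i: "i < n" and j: "j < m"
  shows "mat_adjoint A $$ (i,j) = cnj (A $$ (j,i))"
  using assms unfolding mat_adjoint_def by (simp add: mat_of_rows_index)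

lemma hermitian_matD:
  assumes H: "hermitian_mat A" and A: "A \<in> carrier_mat n n" and i: "i < n" and j: "j < n"
  shows "A$$(j,i) = cnj (A$$(i,j))"
proof -
  have "A$$(j,i) = mat_adjoint A $$ (j,i)" using H unfolding hermitian_mat_def by simp
  also have "\<dots> = cnj (A$$(i,j))" by (rule mat_adjoint_entry[OF A j i])
  finally show ?thesis .
qed

lemma hermitian_matI:
  assumes A: "A \<in> carrier_mat n n" and herm: "\<And>i j. i < n \<Longrightarrow> j < n \<Longrightarrow> A$$(j,i) = cnj (A$$(i,j))"
  shows "hermitian_mat A"
proof -
  have "mat_adjoint A = A"
  proof (rule eq_matI)
    fix i j assume "i < dim_row A" "j < dim_col A"
    thus "mat_adjoint A $$ (i,j) = A $$ (i,j)"
      using A herm[of j i] by (simp add: mat_adjoint_entry[OF A])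
  qed (use mat_adjoint_carrier[OF A] A in auto)
  thus ?thesis unfolding hermitian_mat_def using A by auto
qed

lemma Im_eq_0_if_cnj_eq: "z = cnj z \<Longrightarrow> Im z = 0"
  by (metis complex_cnj_cancel_iff complex_cnj_zero_iff cnj.simps(2) neg_equal_zero)

lemma hermitian_mat_diag_real:
  assumes "hermitian_mat A" "A \<in> carrier_mat n n" "i < n"
  shows "A$$(i,i) = complex_of_real (Re (A$$(i,i)))"
  using Im_eq_0_if_cnj_eq[OF hermitian_matD[OF assms(1,2,3,3)]] by (simp add: complex_eq_iff)

lemma psd_mat_diag_nonneg:
  assumes P: "psd_mat Ch" and Ch: "Ch \<in> carrier_mat n n" and i: "i < n"
  shows "0 \<le> Re (Ch$$(i,i))"
proof -
  have e: "unit_vec n i \<in> carrier_vec n" by simp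
  have "0 \<le> Re (conjugate (unit_vec n i) \<bullet> (Ch *\<^sub>v unit_vec n i))"
    using P e Ch unfolding psd_mat_def by auto
  also have "conjugate (unit_vec n i) \<bullet> (Ch *\<^sub>v unit_vec n i) = (Ch *\<^sub>v unit_vec n i) $ i"
  proof -
    have "conjugate (unit_vec n i) \<bullet> (Ch *\<^sub>v unit_vec n i) =
        (\<Sum>l<n. (if l = i then 1 else 0) * (Ch *\<^sub>v unit_vec n i) $ l)"
      unfolding scalar_prod_def using Ch i by (auto simp: atLeast0LessThan intro!: sum.cong)
    also have "\<dots> = (\<Sum>l<n. if l = i then (Ch *\<^sub>v unit_vec n i) $ l else 0)"
      by (intro sum.cong) auto
    also have "\<dots> = (Ch *\<^sub>v unit_vec n i) $ i" using i by (simp add: sum.delta)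
    finally show ?thesis .
  qed
  also have "(Ch *\<^sub>v unit_vec n i) $ i = Ch$$(i,i)"
  proof -
    have "(Ch *\<^sub>v unit_vec n i) $ i = (\<Sum>j<n. Ch$$(i,j) * unit_vec n i $ j)" by (rule mult_mat_vec_index_sum[OF Ch e i])
    also have "\<dots> = (\<Sum>j<n. if j = i then Ch$$(i,i) else 0)" using i by (intro sum.cong) auto
    also have "\<dots> = Ch$$(i,i)" using i by (simp add: sum.delta')
    finally show ?thesis .
  qed
  finally show ?thesis .
qed

lemma cnj_sesq_form_hermitian:
  assumes H: "hermitian_mat K" "K \<in> carrier_mat n n"
    and x: "x \<in> carrier_vec n" and y: "y \<in> carrier_vec n"
  shows "cnj (sesq_form K x y) = sesq_form K y x"
proof -
  have "cnj (sesq_form K x y) = (\<Sum>i<n. \<Sum>j<n. x$i * cnj (K$$(i,j)) * cnj (y$j))"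
    unfolding sesq_form_def using x by simp
  also have "\<dots> = (\<Sum>i<n. \<Sum>j<n. x$i * K$$(j,i) * cnj (y$j))"
    by (intro sum.cong refl) (simp add: hermitian_matD[OF H, symmetric])
  also have "\<dots> = (\<Sum>j<n. \<Sum>i<n. cnj (y$j) * K$$(j,i) * x$i)"
    by (subst sum.swap) (simp add: mult_ac)
  also have "\<dots> = sesq_form K y x" unfolding sesq_form_def using y by simp
  finally show ?thesis .
qed

lemma inverse_mat_if_mult_mat_vec_inj:
  assumes A: "(A::complex mat) \<in> carrier_mat n n"
    and inj: "\<And>v. v \<in> carrier_vec n \<Longrightarrow> A *\<^sub>v v = 0\<^sub>v n \<Longrightarrow> v = 0\<^sub>v n"
  shows "\<exists>B\<in>carrier_mat n n. A * B = 1\<^sub>m n \<and> B * A = 1\<^sub>m n"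
proof -
  have "det A \<noteq> 0" using det_0_iff_vec_prod_zero[OF A] inj by blast
  from det_non_zero_imp_unit[OF A this, of undefined] show ?thesis
    unfolding Units_def ring_mat_def by auto
qed

lemma mat_inv_inverse:
  assumes A: "A \<in> carrier_mat n n" and ex: "\<exists>B\<in>carrier_mat n n. A * B = 1\<^sub>m n \<and> B * A = 1\<^sub>m n"
  shows "mat_inv A \<in> carrier_mat n n \<and> A * mat_inv A = 1\<^sub>m n \<and> mat_inv A * A = 1\<^sub>m n"
proof -
  have "\<exists>B. inverts_mat A B \<and> inverts_mat B A"
    using ex A unfolding inverts_mat_def by (metis carrier_matD(1))
  hence inv: "inverts_mat A (mat_inv A) \<and> inverts_mat (mat_inv A) A"
    unfolding mat_inv_def by (rule someI_ex)
  define G where "G = mat_inv A"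
  have AG: "A * G = 1\<^sub>m n" using inv A unfolding inverts_mat_def G_def by simp
  have GA: "G * A = 1\<^sub>m (dim_row G)" using inv unfolding inverts_mat_def G_def by simp
  have c: "dim_col G = n" using arg_cong[OF AG, of dim_col] by simp
  have r: "dim_row G = n" using arg_cong[OF GA, of dim_col] A by simp
  show ?thesis using AG GA c r unfolding G_def[symmetric] by auto
qed

lemma lambda_min_le_eigenvalue:
  assumes A: "(A::complex mat) \<in> carrier_mat n n" and lm: "\<theta> \<le> lambda_min A" and ev: "eigenvalue A k"
  shows "\<theta> \<le> Re k"
proof -
  have cp: "char_poly A \<noteq> 0" using degree_monic_char_poly[OF A] by auto
  have "{k. eigenvalue A k} = {k. poly (char_poly A) k = 0}"
    using eigenvalue_root_char_poly[OF A] by auto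
  hence fin: "finite (Re ` {k. eigenvalue A k})" using poly_roots_finite[OF cp] by simp
  have "lambda_min A \<le> Re k" unfolding lambda_min_def by (rule Min_le[OF fin]) (use ev in auto)
  thus ?thesis using lm by simp
qed

lemma vec_norm_sq_unit_vec:
  assumes "i < n" shows "vec_norm_sq (unit_vec n i) = 1"
proof -
  have "vec_norm_sq (unit_vec n i) = (\<Sum>l<n. if l = i then 1 else 0)"
    unfolding vec_norm_sq_def by (intro sum.cong) (auto simp: unit_vec_def)
  also have "\<dots> = 1" using assms by simp
  finally show ?thesis .
qed

lemma vec_norm_sq_normalize:
  assumes "0 < vec_norm_sq x"
  shows "vec_norm_sq (complex_of_real (1 / sqrt (vec_norm_sq x)) \<cdot>\<^sub>v x) = 1"
  unfolding vec_norm_sq_smult using assms by (simp add: norm_divide power_divide)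

lemma quad_form_ge_if_ge_on_unit_vectors:
  assumes K: "K \<in> carrier_mat n n"
    and unit: "\<And>y. y \<in> carrier_vec n \<Longrightarrow> vec_norm_sq y = 1 \<Longrightarrow> m \<le> Re (quad_form K y)"
    and x: "x \<in> carrier_vec n"
  shows "m * vec_norm_sq x \<le> Re (quad_form K x)"
proof (cases "vec_norm_sq x = 0")
  case True
  thus ?thesis using vec_norm_sq_eq_0_imp[OF x True] by (simp add: quad_form_def sesq_form_def)
next
  case False
  hence pos: "0 < vec_norm_sq x" using vec_norm_sq_nonneg[of x] by linarith
  define c where "c = complex_of_real (1 / sqrt (vec_norm_sq x))"
  have "m \<le> Re (quad_form K (c \<cdot>\<^sub>v x))"
    using unit vec_norm_sq_normalize[OF pos] x unfolding c_def by simp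
  also have "quad_form K (c \<cdot>\<^sub>v x) = of_real (1 / vec_norm_sq x) * quad_form K x"
  proof -
    have "cnj c * c = complex_of_real ((1 / sqrt (vec_norm_sq x))\<^sup>2)"
      unfolding c_def by (simp add: power2_eq_square flip: of_real_mult)
    also have "(1 / sqrt (vec_norm_sq x))\<^sup>2 = 1 / vec_norm_sq x" using pos by (simp add: power_divide)
    finally show ?thesis unfolding quad_form_smult[OF x] by simp
  qed
  finally show ?thesis using pos by (simp add: field_simps)
qed

lemma minus_scalar_mat_entry:
  "K \<in> carrier_mat n n \<Longrightarrow> i < n \<Longrightarrow> j < n \<Longrightarrow>
   (K - complex_of_real m \<cdot>\<^sub>m 1\<^sub>m n)$$(i,j) = K$$(i,j) - (if i = j then of_real m else 0)"
  by auto

lemma hermitian_mat_minus_scalar: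
  assumes K: "K \<in> carrier_mat n n" "hermitian_mat K"
  shows "hermitian_mat (K - complex_of_real m \<cdot>\<^sub>m 1\<^sub>m n)"
proof (rule hermitian_matI)
  show "K - complex_of_real m \<cdot>\<^sub>m 1\<^sub>m n \<in> carrier_mat n n" using K by auto
  fix i j assume ij: "i < n" "j < n"
  show "(K - complex_of_real m \<cdot>\<^sub>m 1\<^sub>m n)$$(j,i) = cnj ((K - complex_of_real m \<cdot>\<^sub>m 1\<^sub>m n)$$(i,j))"
    using hermitian_matD[OF K(2,1) ij] ij by (simp add: minus_scalar_mat_entry[OF K(1)])
qed

lemma quad_form_minus_scalar:
  assumes K: "K \<in> carrier_mat n n" and y: "y \<in> carrier_vec n"
  shows "quad_form (K - complex_of_real m \<cdot>\<^sub>m 1\<^sub>m n) y = quad_form K y - of_real (m * vec_norm_sq y)"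
proof -
  have "quad_form (K - complex_of_real m \<cdot>\<^sub>m 1\<^sub>m n) y = (\<Sum>i<n. \<Sum>j<n. cnj (y$i) * K$$(i,j) * y$j
      - (if i = j then of_real m * (cnj (y$i) * y$j) else 0))"
    unfolding quad_form_def sesq_form_def using K y
    by (auto simp: minus_scalar_mat_entry algebra_simps intro!: sum.cong)
  also have "\<dots> = quad_form K y - (\<Sum>i<n. of_real m * (cnj (y$i) * y$i))"
    unfolding quad_form_def sesq_form_def using y by (simp add: sum_subtractf sum.delta cong: if_cong)
  also have "(\<Sum>i<n. of_real m * (cnj (y$i) * y$i)) = of_real (m * vec_norm_sq y)"
    unfolding vec_norm_sq_def cnj_mult_self using y by (simp add: sum_distrib_left)
  finally show ?thesis .
qed

lemma eigenvalue_if_minus_scalar_singular: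
  assumes K: "K \<in> carrier_mat n n"
    and v: "v \<in> carrier_vec n" "v \<noteq> 0\<^sub>v n" "(K - complex_of_real m \<cdot>\<^sub>m 1\<^sub>m n) *\<^sub>v v = 0\<^sub>v n"
  shows "eigenvalue K (complex_of_real m)"
proof -
  have "K *\<^sub>v v = complex_of_real m \<cdot>\<^sub>v v"
  proof (rule eq_vecI)
    fix i assume "i < dim_vec (complex_of_real m \<cdot>\<^sub>v v)"
    hence i: "i < n" using v by simp
    have Km: "K - complex_of_real m \<cdot>\<^sub>m 1\<^sub>m n \<in> carrier_mat n n" using K by auto
    have "0 = (\<Sum>j<n. (K - complex_of_real m \<cdot>\<^sub>m 1\<^sub>m n)$$(i,j) * v$j)"
      using mult_mat_vec_index_sum[OF Km v(1) i] v i by simp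
    also have "\<dots> = (\<Sum>j<n. K$$(i,j) * v$j - (if i = j then of_real m * v$j else 0))"
      using K i by (intro sum.cong refl) (simp add: minus_scalar_mat_entry algebra_simps)
    also have "\<dots> = (\<Sum>j<n. K$$(i,j) * v$j) - of_real m * v$i"
      using i by (simp add: sum_subtractf sum.delta cong: if_cong)
    finally show "(K *\<^sub>v v) $ i = (complex_of_real m \<cdot>\<^sub>v v) $ i"
      using i v mult_mat_vec_index_sum[OF K v(1) i] by simp
  qed (use K v in auto)
  thus ?thesis unfolding eigenvalue_def eigenvector_def using K v by auto
qed

text \<open>For positive semidefinite \<open>H\<close> the quadratic form satisfies the Cauchy--Schwarz
  inequality \<open>\<bar>y\<^sup>H H z\<bar>\<^sup>2 \<le> (y\<^sup>H H y)(z\<^sup>H H z)\<close>; applied to \<open>z = H y\<close> it keeps \<open>y\<^sup>H H y\<close>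
  away from zero on the unit sphere when \<open>H\<close> is invertible.\<close>
lemma quad_form_unit_ge_if_invertible:
  assumes H: "H \<in> carrier_mat n n" "hermitian_mat H"
    and Hpos: "\<And>y. y \<in> carrier_vec n \<Longrightarrow> 0 \<le> Re (quad_form H y)"
    and G: "G \<in> carrier_mat n n" "G * H = 1\<^sub>m n"
    and y: "y \<in> carrier_vec n" "vec_norm_sq y = 1"
  shows "1 \<le> fro_norm_sq G * sqrt (fro_norm_sq H) * Re (quad_form H y)"
proof -
  define z where "z = H *\<^sub>v y"
  have z: "z \<in> carrier_vec n" unfolding z_def using H y by simp
  have "G *\<^sub>v z = y" unfolding z_def
    using assoc_mult_mat_vec[OF G(1) H(1) y(1), symmetric] G(2) y(1) by simp
  hence one: "1 \<le> fro_norm_sq G * vec_norm_sq z" using vec_norm_sq_mult_mat_vec_le[OF G(1) z] y by simp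
  have bzy: "sesq_form H z y = of_real (vec_norm_sq z)"
    unfolding z_def by (rule sesq_form_mult_mat_vec_self[OF H(1) y(1)])
  have byz: "sesq_form H y z = of_real (vec_norm_sq z)"
    using cnj_sesq_form_hermitian[OF H(2,1) z y(1)] bzy by (metis complex_cnj_complex_of_real)
  have disc: "(vec_norm_sq z)\<^sup>2 \<le> Re (quad_form H y) * Re (quad_form H z)"
  proof (rule discriminant_le_if_quadratic_nonneg)
    show "0 \<le> Re (quad_form H z)" by (rule Hpos[OF z])
    fix t :: real
    have "0 \<le> Re (quad_form H (y + complex_of_real t \<cdot>\<^sub>v z))" using Hpos y z by simp
    also have "\<dots> = Re (quad_form H y) + 2 * vec_norm_sq z * t + Re (quad_form H z) * t\<^sup>2"
      unfolding quad_form_add_scaled[OF y(1) z] bzy byz by simp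
    finally show "0 \<le> Re (quad_form H y) + 2 * vec_norm_sq z * t + Re (quad_form H z) * t\<^sup>2" .
  qed
  have "Re (quad_form H z) \<le> sqrt (fro_norm_sq H) * vec_norm_sq z"
    using cmod_quad_form_le[OF H(1) z] abs_Re_le_cmod[of "quad_form H z"] by linarith
  hence "(vec_norm_sq z)\<^sup>2 \<le> Re (quad_form H y) * (sqrt (fro_norm_sq H) * vec_norm_sq z)"
    using disc Hpos[OF y(1)] by (meson mult_left_mono order_trans)
  moreover have "0 < vec_norm_sq z" using one vec_norm_sq_nonneg[of z]
    by (metis mult_zero_right not_less_iff_gr_or_eq not_one_le_zero order_le_less)
  ultimately have "vec_norm_sq z \<le> Re (quad_form H y) * sqrt (fro_norm_sq H)"
    by (simp add: power2_eq_square mult_ac)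
  hence "fro_norm_sq G * vec_norm_sq z \<le> fro_norm_sq G * (Re (quad_form H y) * sqrt (fro_norm_sq H))"
    by (intro mult_left_mono) auto
  with one show ?thesis by (simp add: mult_ac)
qed

lemma singular_if_quad_form_not_bounded_below:
  assumes H: "H \<in> carrier_mat n n" "hermitian_mat H"
    and Hpos: "\<And>y. y \<in> carrier_vec n \<Longrightarrow> 0 \<le> Re (quad_form H y)"
    and small: "\<And>c. 0 < c \<Longrightarrow> \<exists>y\<in>carrier_vec n. vec_norm_sq y = 1 \<and> Re (quad_form H y) < c"
  shows "\<exists>v. v \<in> carrier_vec n \<and> v \<noteq> 0\<^sub>v n \<and> H *\<^sub>v v = 0\<^sub>v n"
proof (rule ccontr)
  assume "\<not> ?thesis"
  then obtain G where G: "G \<in> carrier_mat n n" "G * H = 1\<^sub>m n"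
    using inverse_mat_if_mult_mat_vec_inj[OF H(1)] by blast
  define P where "P = fro_norm_sq G * sqrt (fro_norm_sq H)"
  have key: "1 \<le> P * Re (quad_form H y)" if "y \<in> carrier_vec n" "vec_norm_sq y = 1" for y
    using quad_form_unit_ge_if_invertible[OF H Hpos G that] unfolding P_def by simp
  have P0: "0 < P"
  proof -
    obtain y where "y \<in> carrier_vec n" "vec_norm_sq y = 1" using small[of 1] by auto
    hence "P \<noteq> 0" using key by fastforce
    moreover have "0 \<le> P" unfolding P_def by simp
    ultimately show ?thesis by simp
  qed
  then obtain y where y: "y \<in> carrier_vec n" "vec_norm_sq y = 1" and "Re (quad_form H y) < 1/P"
    using small[of "1/P"] by auto
  hence "P * Re (quad_form H y) < 1" using P0 by (simp add: field_simps)
  with key[OF y] show False by simp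
qed

text \<open>The infimum \<open>m\<close> of the Rayleigh quotient is an eigenvalue: otherwise \<open>K - m I\<close> would be
  invertible and the previous lemma would push the infimum above \<open>m\<close>.\<close>
lemma quad_form_ge_if_eigenvalues_ge:
  assumes K: "K \<in> carrier_mat n n" "hermitian_mat K" and n: "0 < n"
    and ev: "\<And>k. eigenvalue K k \<Longrightarrow> \<theta> \<le> Re k"
    and x: "x \<in> carrier_vec n"
  shows "\<theta> * vec_norm_sq x \<le> Re (quad_form K x)"
proof -
  define S where "S = {Re (quad_form K y) | y. y \<in> carrier_vec n \<and> vec_norm_sq y = 1}"
  have Sne: "S \<noteq> {}" using vec_norm_sq_unit_vec[OF n] unfolding S_def by fastforce
  have Sbdd: "bdd_below S"
  proof
    fix s assume "s \<in> S"
    then obtain y where y: "y \<in> carrier_vec n" "vec_norm_sq y = 1" and s: "s = Re (quad_form K y)"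
      unfolding S_def by blast
    have "cmod (quad_form K y) \<le> sqrt (fro_norm_sq K)" using cmod_quad_form_le[OF K(1) y(1)] y(2) by simp
    thus "- sqrt (fro_norm_sq K) \<le> s" unfolding s using abs_Re_le_cmod[of "quad_form K y"] by linarith
  qed
  define m where "m = Inf S"
  have mS: "m \<le> Re (quad_form K y)" if "y \<in> carrier_vec n" "vec_norm_sq y = 1" for y
    unfolding m_def by (rule cInf_lower[OF _ Sbdd]) (use that in \<open>auto simp: S_def\<close>)
  define H where "H = K - complex_of_real m \<cdot>\<^sub>m 1\<^sub>m n"
  have H: "H \<in> carrier_mat n n" "hermitian_mat H"
    unfolding H_def using K hermitian_mat_minus_scalar[OF K] by auto
  have qfH: "Re (quad_form H y) = Re (quad_form K y) - m * vec_norm_sq y" if "y \<in> carrier_vec n" for y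
    unfolding H_def quad_form_minus_scalar[OF K(1) that] by simp
  have "\<exists>v. v \<in> carrier_vec n \<and> v \<noteq> 0\<^sub>v n \<and> H *\<^sub>v v = 0\<^sub>v n"
  proof (rule singular_if_quad_form_not_bounded_below[OF H])
    show "0 \<le> Re (quad_form H y)" if "y \<in> carrier_vec n" for y
      using quad_form_ge_if_ge_on_unit_vectors[OF K(1) mS that] qfH[OF that] by simp
    fix c :: real assume "0 < c"
    then obtain s where "s \<in> S" "s < m + c" using cInf_lessD[OF Sne, of "m + c"] unfolding m_def by auto
    thus "\<exists>y\<in>carrier_vec n. vec_norm_sq y = 1 \<and> Re (quad_form H y) < c"
      unfolding S_def using qfH by force
  qed
  then obtain v where "v \<in> carrier_vec n" "v \<noteq> 0\<^sub>v n" "H *\<^sub>v v = 0\<^sub>v n" by blast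
  from eigenvalue_if_minus_scalar_singular[OF K(1) this[unfolded H_def]]
  have "\<theta> \<le> m" using ev by force
  thus ?thesis
    using quad_form_ge_if_ge_on_unit_vectors[OF K(1) mS x] vec_norm_sq_nonneg[of x]
    by (smt (verit) mult_right_mono)
qed

lemma quad_form_ge_if_lambda_min_ge:
  assumes K: "K \<in> carrier_mat n n" "hermitian_mat K" and n: "0 < n"
    and lm: "\<theta> \<le> lambda_min K" and x: "x \<in> carrier_vec n"
  shows "\<theta> * vec_norm_sq x \<le> Re (quad_form K x)"
  using quad_form_ge_if_eigenvalues_ge[OF K n _ x] lambda_min_le_eigenvalue[OF K(1) lm] by blast

section \<open>Operator norm\<close>

lemma vec_norm_le_1_iff: "vec_norm x \<le> 1 \<longleftrightarrow> vec_norm_sq x \<le> 1"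
  unfolding vec_norm_eq_sqrt by simp

lemma op_norm_set_le_fro_norm:
  assumes A: "A \<in> carrier_mat m n"
    and s: "s \<in> {vec_norm (A *\<^sub>v x) | x. x \<in> carrier_vec (dim_col A) \<and> vec_norm x \<le> 1}"
  shows "s \<le> fro_norm A"
proof -
  obtain x where x: "x \<in> carrier_vec n" "vec_norm_sq x \<le> 1" and s: "s = vec_norm (A *\<^sub>v x)"
    using A s vec_norm_le_1_iff by auto
  have "vec_norm_sq (A *\<^sub>v x) \<le> fro_norm_sq A * vec_norm_sq x"
    by (rule vec_norm_sq_mult_mat_vec_le[OF A x(1)])
  also have "\<dots> \<le> fro_norm_sq A" using x(2) by (simp add: mult_left_le)
  finally show ?thesis unfolding s vec_norm_eq_sqrt fro_norm_eq_sqrt by simp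
qed

lemma vec_norm_mult_le_op_norm:
  assumes A: "A \<in> carrier_mat m n" and x: "x \<in> carrier_vec n" "vec_norm_sq x \<le> 1"
  shows "vec_norm (A *\<^sub>v x) \<le> op_norm A"
  unfolding op_norm_def
  by (rule cSup_upper[OF _ bdd_aboveI[OF op_norm_set_le_fro_norm[OF A]]])
    (use A x vec_norm_le_1_iff in auto)

lemma op_norm_nonneg:
  assumes A: "A \<in> carrier_mat m n"
  shows "0 \<le> op_norm A"
proof -
  have "0 \<le> vec_norm (A *\<^sub>v 0\<^sub>v n)" unfolding vec_norm_eq_sqrt by simp
  also have "\<dots> \<le> op_norm A" by (rule vec_norm_mult_le_op_norm[OF A]) (auto simp: vec_norm_sq_def)
  finally show ?thesis .
qed

lemma op_norm_le_fro_norm: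
  assumes A: "A \<in> carrier_mat m n"
  shows "op_norm A \<le> fro_norm A"
  unfolding op_norm_def
  by (rule cSup_least[OF _ op_norm_set_le_fro_norm[OF A]])
    (use A in \<open>auto intro!: exI[of _ "0\<^sub>v n"] simp: vec_norm_eq_sqrt vec_norm_sq_def\<close>)

lemma vec_norm_sq_mult_le_op_norm:
  assumes A: "A \<in> carrier_mat m n" and x: "x \<in> carrier_vec n"
  shows "vec_norm_sq (A *\<^sub>v x) \<le> (op_norm A)\<^sup>2 * vec_norm_sq x"
proof (cases "vec_norm_sq x = 0")
  case True
  hence "A *\<^sub>v x = 0\<^sub>v m" using A vec_norm_sq_eq_0_imp[OF x] by auto
  hence "vec_norm_sq (A *\<^sub>v x) = 0" by (simp add: vec_norm_sq_def)
  thus ?thesis by simp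
next
  case False
  hence pos: "0 < vec_norm_sq x" using vec_norm_sq_nonneg[of x] by linarith
  define c where "c = complex_of_real (1 / sqrt (vec_norm_sq x))"
  have "vec_norm (c \<cdot>\<^sub>v (A *\<^sub>v x)) \<le> op_norm A"
    using vec_norm_mult_le_op_norm[OF A _ eq_refl[OF vec_norm_sq_normalize[OF pos]]] A x
    unfolding c_def by (simp add: mult_mat_vec)
  moreover have "vec_norm_sq (c \<cdot>\<^sub>v (A *\<^sub>v x)) = vec_norm_sq (A *\<^sub>v x) / vec_norm_sq x"
    unfolding vec_norm_sq_smult c_def using pos by (simp add: norm_divide power_divide)
  ultimately have "sqrt (vec_norm_sq (A *\<^sub>v x) / vec_norm_sq x) \<le> op_norm A"
    unfolding vec_norm_eq_sqrt by simp
  hence "vec_norm_sq (A *\<^sub>v x) / vec_norm_sq x \<le> (op_norm A)\<^sup>2"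
    by (metis vec_norm_sq_nonneg pos divide_nonneg_pos real_le_rsqrt real_sqrt_le_iff sqrt_le_D)
  thus ?thesis using pos by (simp add: field_simps)
qed

section \<open>Second moments\<close>

lemma integrable_mult_cnj:
  fixes P :: "'a measure" and r :: "'a \<Rightarrow> complex vec"
  assumes ri: "(\<lambda>\<omega>. r \<omega> $ i) \<in> borel_measurable P" "integrable P (\<lambda>\<omega>. (cmod (r \<omega> $ i))\<^sup>2)"
    and rj: "(\<lambda>\<omega>. r \<omega> $ j) \<in> borel_measurable P" "integrable P (\<lambda>\<omega>. (cmod (r \<omega> $ j))\<^sup>2)"
  shows "integrable P (\<lambda>\<omega>. r \<omega> $ i * cnj (r \<omega> $ j))"
proof (rule Bochner_Integration.integrable_bound)
  show "integrable P (\<lambda>\<omega>. (cmod (r \<omega> $ i))\<^sup>2 + (cmod (r \<omega> $ j))\<^sup>2)" using ri rj by auto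
  have "(\<lambda>\<omega>. cnj (r \<omega> $ j)) \<in> borel_measurable P"
    by (rule borel_measurable_continuous_on[OF continuous_on_cnj[OF continuous_on_id] rj(1)])
  thus "(\<lambda>\<omega>. r \<omega> $ i * cnj (r \<omega> $ j)) \<in> borel_measurable P"
    using ri(1) by (intro borel_measurable_times) auto
  show "AE \<omega> in P. norm (r \<omega> $ i * cnj (r \<omega> $ j)) \<le> norm ((cmod (r \<omega> $ i))\<^sup>2 + (cmod (r \<omega> $ j))\<^sup>2)"
  proof (rule AE_I2)
    fix \<omega>
    have "2 * (cmod (r \<omega> $ i) * cmod (r \<omega> $ j)) \<le> (cmod (r \<omega> $ i))\<^sup>2 + (cmod (r \<omega> $ j))\<^sup>2"
      using sum_squares_bound[of "cmod (r \<omega> $ i)" "cmod (r \<omega> $ j)"] by (simp add: mult.assoc)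
    moreover have "0 \<le> cmod (r \<omega> $ i) * cmod (r \<omega> $ j)" by simp
    ultimately have "cmod (r \<omega> $ i) * cmod (r \<omega> $ j) \<le> (cmod (r \<omega> $ i))\<^sup>2 + (cmod (r \<omega> $ j))\<^sup>2"
      by linarith
    thus "norm (r \<omega> $ i * cnj (r \<omega> $ j)) \<le> norm ((cmod (r \<omega> $ i))\<^sup>2 + (cmod (r \<omega> $ j))\<^sup>2)"
      by (simp add: norm_mult)
  qed
qed

lemma cmod_sum_mult_sq_eq:
  "(cmod (\<Sum>i<n. d i * x i))\<^sup>2 = Re (\<Sum>i<n. \<Sum>j<n. (d i * cnj (d j)) * (x i * cnj (x j)))"
proof -
  have "(cmod (\<Sum>i<n. d i * x i))\<^sup>2 = Re ((\<Sum>i<n. d i * x i) * cnj (\<Sum>j<n. d j * x j))"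
    by (simp only: complex_norm_square[symmetric] Re_complex_of_real)
  also have "(\<Sum>i<n. d i * x i) * cnj (\<Sum>j<n. d j * x j)
      = (\<Sum>i<n. d i * x i) * (\<Sum>j<n. cnj (d j) * cnj (x j))" by simp
  also have "\<dots> = (\<Sum>i<n. \<Sum>j<n. (d i * cnj (d j)) * (x i * cnj (x j)))"
    unfolding sum_product by (intro sum.cong refl) (simp add: mult_ac)
  finally show ?thesis .
qed

lemma integral_row_second_moment:
  fixes P :: "'a measure" and r :: "'a \<Rightarrow> complex vec" and C :: "complex mat"
    and d :: "nat \<Rightarrow> complex"
  assumes meas: "\<forall>i<n. (\<lambda>\<omega>. r \<omega> $ i) \<in> borel_measurable P \<and> integrable P (\<lambda>\<omega>. (cmod (r \<omega> $ i))\<^sup>2)"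
    and cov: "\<forall>i<n. \<forall>j<n. (LINT \<omega>|P. r \<omega> $ i * cnj (r \<omega> $ j)) = C $$ (i,j)"
  defines "f \<equiv> \<lambda>\<omega>. \<Sum>i<n. \<Sum>j<n. (d i * cnj (d j)) * (r \<omega> $ i * cnj (r \<omega> $ j))"
  shows "integrable P f" and "(LINT \<omega>|P. f \<omega>) = quad_form C (vec n (\<lambda>j. cnj (d j)))"
proof -
  have ip: "integrable P (\<lambda>\<omega>. (d i * cnj (d j)) * (r \<omega> $ i * cnj (r \<omega> $ j)))"
    if "i < n" "j < n" for i j
    using meas that by (intro Bochner_Integration.integrable_mult_right integrable_mult_cnj) auto
  thus "integrable P f" unfolding f_def by (intro Bochner_Integration.integrable_sum) auto
  have "(LINT \<omega>|P. f \<omega>) = (\<Sum>i<n. \<Sum>j<n. LINT \<omega>|P. (d i * cnj (d j)) * (r \<omega> $ i * cnj (r \<omega> $ j)))"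
    unfolding f_def
  proof (subst Bochner_Integration.integral_sum)
    show "complex_integrable P (\<lambda>\<omega>. \<Sum>j<n. (d i * cnj (d j)) * (r \<omega> $ i * cnj (r \<omega> $ j)))"
      if "i \<in> {..<n}" for i using ip that by (intro Bochner_Integration.integrable_sum) auto
    show "(\<Sum>i<n. (LINT \<omega>|P. (\<Sum>j<n. (d i * cnj (d j)) * (r \<omega> $ i * cnj (r \<omega> $ j)))))
        = (\<Sum>i<n. \<Sum>j<n. (LINT \<omega>|P. (d i * cnj (d j)) * (r \<omega> $ i * cnj (r \<omega> $ j))))"
      using ip by (intro sum.cong refl Bochner_Integration.integral_sum) auto
  qed
  also have "\<dots> = (\<Sum>i<n. \<Sum>j<n. (d i * cnj (d j)) * C$$(i,j))"
    using cov by (intro sum.cong refl) simp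
  also have "\<dots> = quad_form C (vec n (\<lambda>j. cnj (d j)))"
    unfolding quad_form_def sesq_form_def by (auto intro!: sum.cong simp: mult_ac)
  finally show "(LINT \<omega>|P. f \<omega>) = quad_form C (vec n (\<lambda>j. cnj (d j)))" .
qed

lemma integral_vec_norm_sq_mult_mat_vec:
  fixes P :: "'a measure" and r :: "'a \<Rightarrow> complex vec" and D C :: "complex mat"
  assumes rc: "\<forall>\<omega>\<in>space P. r \<omega> \<in> carrier_vec n"
    and meas: "\<forall>i<n. (\<lambda>\<omega>. r \<omega> $ i) \<in> borel_measurable P \<and> integrable P (\<lambda>\<omega>. (cmod (r \<omega> $ i))\<^sup>2)"
    and cov: "\<forall>i<n. \<forall>j<n. (LINT \<omega>|P. r \<omega> $ i * cnj (r \<omega> $ j)) = C $$ (i,j)"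
    and D: "D \<in> carrier_mat n n"
  shows "integrable P (\<lambda>\<omega>. vec_norm_sq (D *\<^sub>v r \<omega>))"
    and "(LINT \<omega>|P. vec_norm_sq (D *\<^sub>v r \<omega>)) = (\<Sum>k<n. Re (quad_form C (vec n (\<lambda>j. cnj (D$$(k,j))))))"
proof -
  define f where "f k \<omega> = (\<Sum>i<n. \<Sum>j<n. (D$$(k,i) * cnj (D$$(k,j))) * (r \<omega> $ i * cnj (r \<omega> $ j)))"
    for k \<omega>
  have row: "integrable P (f k)" "(LINT \<omega>|P. f k \<omega>) = quad_form C (vec n (\<lambda>j. cnj (D$$(k,j))))"
    for k using integral_row_second_moment[OF meas cov, where d="\<lambda>j. D$$(k,j)"] unfolding f_def
    by simp_all
  have pw: "vec_norm_sq (D *\<^sub>v r \<omega>) = (\<Sum>k<n. Re (f k \<omega>))" if "\<omega> \<in> space P" for \<omega>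
  proof -
    have rw: "r \<omega> \<in> carrier_vec n" using rc that by auto
    have "vec_norm_sq (D *\<^sub>v r \<omega>) = (\<Sum>k<n. (cmod ((D *\<^sub>v r \<omega>) $ k))\<^sup>2)"
      unfolding vec_norm_sq_def using D by simp
    also have "\<dots> = (\<Sum>k<n. (cmod (\<Sum>i<n. D$$(k,i) * r \<omega> $ i))\<^sup>2)"
      by (intro sum.cong refl, subst mult_mat_vec_index_sum[OF D rw]) auto
    finally show ?thesis unfolding f_def cmod_sum_mult_sq_eq .
  qed
  have "integrable P (\<lambda>\<omega>. \<Sum>k<n. Re (f k \<omega>))" using row(1) by auto
  thus "integrable P (\<lambda>\<omega>. vec_norm_sq (D *\<^sub>v r \<omega>))"
    by (rule Bochner_Integration.integrable_cong[THEN iffD1, OF refl, rotated]) (simp add: pw)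
  have "(LINT \<omega>|P. vec_norm_sq (D *\<^sub>v r \<omega>)) = (LINT \<omega>|P. (\<Sum>k<n. Re (f k \<omega>)))"
    by (rule Bochner_Integration.integral_cong) (simp_all add: pw)
  also have "\<dots> = (\<Sum>k<n. Re (LINT \<omega>|P. f k \<omega>))"
    using row(1) by (subst Bochner_Integration.integral_sum) auto
  finally show "(LINT \<omega>|P. vec_norm_sq (D *\<^sub>v r \<omega>)) = (\<Sum>k<n. Re (quad_form C (vec n (\<lambda>j. cnj (D$$(k,j))))))"
    using row(2) by simp
qed

section \<open>Perturbation of the solution of a linear system\<close>

lemma vec_norm_sq_le_image_if_quad_form_ge:
  assumes L: "L \<in> carrier_mat n n" and v: "v \<in> carrier_vec n" and c: "0 < c"
    and lb: "c * vec_norm_sq v \<le> Re (quad_form L v)"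
  shows "c\<^sup>2 * vec_norm_sq v \<le> vec_norm_sq (L *\<^sub>v v)"
proof (cases "vec_norm_sq v = 0")
  case True thus ?thesis by simp
next
  case False
  hence pos: "0 < vec_norm_sq v" using vec_norm_sq_nonneg[of v] by linarith
  have "(c * vec_norm_sq v)\<^sup>2 \<le> (Re (quad_form L v))\<^sup>2"
    using lb c pos by (intro power_mono) auto
  also have "\<dots> \<le> (cmod (quad_form L v))\<^sup>2" using abs_Re_le_cmod[of "quad_form L v"]
    by (metis abs_ge_zero power2_abs power_mono)
  also have "\<dots> \<le> vec_norm_sq v * vec_norm_sq (L *\<^sub>v v)" by (rule cmod_quad_form_sq_le_image[OF L v])
  finally have "vec_norm_sq v * (c\<^sup>2 * vec_norm_sq v) \<le> vec_norm_sq v * vec_norm_sq (L *\<^sub>v v)"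
    by (simp add: power_mult_distrib power2_eq_square mult_ac)
  thus ?thesis using pos by simp
qed

lemma vec_norm_sq_mult_inverse_le:
  assumes K: "K \<in> carrier_mat n n" and G: "G \<in> carrier_mat n n" and KG: "K * G = 1\<^sub>m n"
    and th: "0 < \<theta>"
    and lb: "\<And>x. x \<in> carrier_vec n \<Longrightarrow> \<theta> * vec_norm_sq x \<le> Re (quad_form K x)"
    and u: "u \<in> carrier_vec n"
  shows "vec_norm_sq (G *\<^sub>v u) \<le> 1/\<theta>\<^sup>2 * vec_norm_sq u"
proof -
  have x: "G *\<^sub>v u \<in> carrier_vec n" using G u by simp
  have "K *\<^sub>v (G *\<^sub>v u) = u" using assoc_mult_mat_vec[OF K G u, symmetric] KG u by simp
  with vec_norm_sq_le_image_if_quad_form_ge[OF K x th lb[OF x]]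
  have "\<theta>\<^sup>2 * vec_norm_sq (G *\<^sub>v u) \<le> vec_norm_sq u" by simp
  thus ?thesis using th by (simp add: field_simps)
qed

text \<open>The key point is \<open>Kh \<ge> \<theta>/2 I\<close>, since \<open>\<bar>x\<^sup>H (K - Kh) x\<bar> \<le> \<parallel>K - Kh\<parallel>\<^sub>F \<parallel>x\<parallel>\<^sup>2\<close>.\<close>
lemma quad_form_le_perturbed_image:
  assumes K: "K \<in> carrier_mat n n" and Kh: "Kh \<in> carrier_mat n n" and th: "0 < \<theta>"
    and lb: "\<And>x. x \<in> carrier_vec n \<Longrightarrow> \<theta> * vec_norm_sq x \<le> Re (quad_form K x)"
    and fsd: "fro_norm_sq (K - Kh) \<le> \<theta>\<^sup>2/4"
    and v: "v \<in> carrier_vec n"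
  shows "Re (quad_form K v) \<le> 4/\<theta> * vec_norm_sq (Kh *\<^sub>v v)"
proof -
  define w where "w = Kh *\<^sub>v v"
  have D: "K - Kh \<in> carrier_mat n n" using Kh by (rule minus_carrier_mat)
  have split: "quad_form K v = quad_form Kh v + quad_form (K - Kh) v"
    using quad_form_minus_mat[OF K Kh v] by simp
  have "sqrt (fro_norm_sq (K - Kh)) \<le> sqrt ((\<theta>/2)\<^sup>2)"
    using fsd by (intro real_sqrt_le_mono) (simp add: power_divide)
  hence "sqrt (fro_norm_sq (K - Kh)) \<le> \<theta>/2" using th by simp
  hence dq: "cmod (quad_form (K - Kh) v) \<le> \<theta>/2 * vec_norm_sq v"
    using cmod_quad_form_le[OF D v] by (meson mult_right_mono vec_norm_sq_nonneg order_trans)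
  have "\<theta>/2 * vec_norm_sq v \<le> Re (quad_form Kh v)"
    using lb[OF v] split dq abs_Re_le_cmod[of "quad_form (K - Kh) v"] by simp
  from vec_norm_sq_le_image_if_quad_form_ge[OF Kh v _ this]
  have vw: "vec_norm_sq v \<le> 4/\<theta>\<^sup>2 * vec_norm_sq w"
    unfolding w_def using th by (simp add: power_divide field_simps)
  have "(cmod (quad_form Kh v))\<^sup>2 \<le> (2/\<theta> * vec_norm_sq w)\<^sup>2"
  proof -
    have "(cmod (quad_form Kh v))\<^sup>2 \<le> vec_norm_sq v * vec_norm_sq w"
      unfolding w_def by (rule cmod_quad_form_sq_le_image[OF Kh v])
    also have "\<dots> \<le> (4/\<theta>\<^sup>2 * vec_norm_sq w) * vec_norm_sq w" using vw by (intro mult_right_mono) auto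
    also have "\<dots> = (2/\<theta> * vec_norm_sq w)\<^sup>2" by (simp add: power2_eq_square)
    finally show ?thesis .
  qed
  hence l3: "cmod (quad_form Kh v) \<le> 2/\<theta> * vec_norm_sq w"
    by (rule power2_le_imp_le) (use th in simp)
  have "Re (quad_form K v) \<le> cmod (quad_form Kh v) + \<theta>/2 * vec_norm_sq v"
    using split abs_Re_le_cmod[of "quad_form Kh v"] abs_Re_le_cmod[of "quad_form (K - Kh) v"] dq by simp
  also have "\<dots> \<le> 2/\<theta> * vec_norm_sq w + \<theta>/2 * (4/\<theta>\<^sup>2 * vec_norm_sq w)"
    using l3 vw th by (intro add_mono mult_left_mono) auto
  also have "\<dots> = 4/\<theta> * vec_norm_sq w" using th by (simp add: field_simps power2_eq_square)
  finally show ?thesis unfolding w_def .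
qed

lemma inverse_mat_if_close_to_pos_def:
  assumes K: "K \<in> carrier_mat n n" and Kh: "Kh \<in> carrier_mat n n" and th: "0 < \<theta>"
    and lb: "\<And>x. x \<in> carrier_vec n \<Longrightarrow> \<theta> * vec_norm_sq x \<le> Re (quad_form K x)"
    and fsd: "fro_norm_sq (K - Kh) \<le> \<theta>\<^sup>2/4"
  shows "\<exists>B\<in>carrier_mat n n. Kh * B = 1\<^sub>m n \<and> B * Kh = 1\<^sub>m n"
proof (rule inverse_mat_if_mult_mat_vec_inj[OF Kh])
  fix v assume v: "v \<in> carrier_vec n" "Kh *\<^sub>v v = 0\<^sub>v n"
  have "\<theta> * vec_norm_sq v \<le> 4/\<theta> * vec_norm_sq (Kh *\<^sub>v v)"
    using lb[OF v(1)] quad_form_le_perturbed_image[OF K Kh th lb fsd v(1)] by linarith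
  also have "\<dots> = 0" using v(2) by (simp add: vec_norm_sq_def)
  finally have "vec_norm_sq v = 0"
    using th vec_norm_sq_nonneg[of v] by (simp add: mult_le_0_iff)
  thus "v = 0\<^sub>v n" by (rule vec_norm_sq_eq_0_imp[OF v(1)])
qed

lemma hermitian_mult_mat_vec_cnj_row:
  assumes K: "K \<in> carrier_mat n n" and X: "X \<in> carrier_mat n n"
   and hK: "hermitian_mat K" and k: "k < n"
  shows "K *\<^sub>v vec n (\<lambda>j. cnj (X$$(k,j))) = vec n (\<lambda>j. cnj ((X * K)$$(k,j)))"
proof (rule eq_vecI)
  fix i assume "i < dim_vec (vec n (\<lambda>j. cnj ((X * K)$$(k,j))))"
  hence i: "i < n" by simp
  have "(K *\<^sub>v vec n (\<lambda>j. cnj (X$$(k,j))))$i = (\<Sum>j<n. K$$(i,j) * cnj (X$$(k,j)))"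
    using mult_mat_vec_index_sum[OF K _ i, of "vec n (\<lambda>j. cnj (X$$(k,j)))"] by simp
  also have "\<dots> = (\<Sum>j<n. cnj (X$$(k,j) * K$$(j,i)))"
    using i by (intro sum.cong refl) (simp add: hermitian_matD[OF hK K, symmetric] mult.commute)
  also have "\<dots> = cnj ((X * K)$$(k,i))" using mult_mat_index_sum[OF X K k i] by simp
  finally show "(K *\<^sub>v vec n (\<lambda>j. cnj (X$$(k,j))))$i = vec n (\<lambda>j. cnj ((X * K)$$(k,j))) $ i"
    using i by simp
qed (use K in simp)

lemma vec_minus_minus:
  fixes a b c :: "complex vec"
  assumes "a \<in> carrier_vec n" "b \<in> carrier_vec n" "c \<in> carrier_vec n"
  shows "a - (b - c) = (a - b) + c"
  using assms by (intro eq_vecI) (auto simp: algebra_simps)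

lemma quad_form_perturbed_solution_row_le:
  assumes th: "0 < \<theta>" and K: "K \<in> carrier_mat n n" and Kh: "Kh \<in> carrier_mat n n"
    and X: "X \<in> carrier_mat n n" and Xh: "Xh \<in> carrier_mat n n"
    and hK: "hermitian_mat K" and hKh: "hermitian_mat Kh"
    and lb: "\<And>x. x \<in> carrier_vec n \<Longrightarrow> \<theta> * vec_norm_sq x \<le> Re (quad_form K x)"
    and fsd: "fro_norm_sq (K - Kh) \<le> \<theta>\<^sup>2/4" and k: "k < n"
  defines "crow \<equiv> \<lambda>B. vec n (\<lambda>j. cnj (B$$(k,j)))"
  shows "Re (quad_form K (crow Xh - crow X))
    \<le> 8/\<theta> * (vec_norm_sq (crow (Xh * Kh) - crow (X * K)) + vec_norm_sq ((K - Kh) *\<^sub>v crow X))"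
proof -
  have rc[simp]: "crow B \<in> carrier_vec n" for B unfolding crow_def by simp
  have DD: "K - Kh \<in> carrier_mat n n" using Kh by (rule minus_carrier_mat)
  have Kz: "K *\<^sub>v crow X = crow (X * K)" and Khz: "Kh *\<^sub>v crow Xh = crow (Xh * Kh)"
    unfolding crow_def by (rule hermitian_mult_mat_vec_cnj_row[OF K X hK k],
      rule hermitian_mult_mat_vec_cnj_row[OF Kh Xh hKh k])
  have "Kh *\<^sub>v (crow Xh - crow X) = crow (Xh * Kh) - Kh *\<^sub>v crow X"
    using mult_minus_distrib_mat_vec[OF Kh rc rc] Khz by simp
  also have "Kh *\<^sub>v crow X = crow (X * K) - (K - Kh) *\<^sub>v crow X"
    using minus_mult_distrib_mat_vec[OF K Kh rc, of X] Kz Kh by (intro eq_vecI) auto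
  also have "crow (Xh * Kh) - (crow (X * K) - (K - Kh) *\<^sub>v crow X)
      = (crow (Xh * Kh) - crow (X * K)) + (K - Kh) *\<^sub>v crow X"
    by (rule vec_minus_minus[of _ n]) (use DD in auto)
  finally have w: "Kh *\<^sub>v (crow Xh - crow X) = (crow (Xh * Kh) - crow (X * K)) + (K - Kh) *\<^sub>v crow X" .
  have "Re (quad_form K (crow Xh - crow X)) \<le> 4/\<theta> * vec_norm_sq (Kh *\<^sub>v (crow Xh - crow X))"
    by (rule quad_form_le_perturbed_image[OF K Kh th lb fsd]) auto
  also have "\<dots> \<le> 4/\<theta> * (2 * vec_norm_sq (crow (Xh * Kh) - crow (X * K)) + 2 * vec_norm_sq ((K - Kh) *\<^sub>v crow X))"
    unfolding w using th DD by (intro mult_left_mono vec_norm_sq_add_le[of _ n]) auto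
  finally show ?thesis by (simp add: algebra_simps)
qed

lemma perturbed_solution_quad_form_le:
  fixes K Kh G Gh Y Yh :: "complex mat"
  assumes th: "0 < \<theta>" and K: "K \<in> carrier_mat n n" and Kh: "Kh \<in> carrier_mat n n"
    and G: "G \<in> carrier_mat n n" and Gh: "Gh \<in> carrier_mat n n"
    and Y: "Y \<in> carrier_mat n n" and Yh: "Yh \<in> carrier_mat n n"
    and hK: "hermitian_mat K" and hKh: "hermitian_mat Kh"
    and lb: "\<And>x. x \<in> carrier_vec n \<Longrightarrow> \<theta> * vec_norm_sq x \<le> Re (quad_form K x)"
    and fsd: "fro_norm_sq (K - Kh) \<le> \<theta>\<^sup>2/4"
    and GK: "G * K = 1\<^sub>m n" and GKh: "Gh * Kh = 1\<^sub>m n"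
  shows "(\<Sum>k<n. Re (quad_form K (vec n (\<lambda>j. cnj ((Yh * Gh - Y * G)$$(k,j)))))) \<le>
    8/\<theta> * (fro_norm_sq (Yh - Y) + (\<Sum>k<n. vec_norm_sq ((K - Kh) *\<^sub>v vec n (\<lambda>j. cnj ((Y * G)$$(k,j))))))"
proof -
  define crow where "crow k B = vec n (\<lambda>j. cnj (B$$(k,j)))" for k B
  have X: "Y * G \<in> carrier_mat n n" and Xh: "Yh * Gh \<in> carrier_mat n n" using Y G Yh Gh by auto
  have XK: "Y * G * K = Y" using assoc_mult_mat[OF Y G K] GK Y by simp
  have XKh: "Yh * Gh * Kh = Yh" using assoc_mult_mat[OF Yh Gh Kh] GKh Yh by simp
  have rows: "vec n (\<lambda>j. cnj ((Yh * Gh - Y * G)$$(k,j))) = crow k (Yh * Gh) - crow k (Y * G)"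
    if "k < n" for k unfolding crow_def using X Xh that by (intro eq_vecI) (auto simp del: index_mult_mat)
  have fsY: "(\<Sum>k<n. vec_norm_sq (crow k Yh - crow k Y)) = fro_norm_sq (Yh - Y)"
    unfolding fro_norm_sq_def vec_norm_sq_def crow_def using Y Yh
    by (intro sum.cong refl) (auto simp: complex_cnj_diff[symmetric] simp del: complex_cnj_diff)
  have "(\<Sum>k<n. Re (quad_form K (vec n (\<lambda>j. cnj ((Yh * Gh - Y * G)$$(k,j)))))) \<le>
      (\<Sum>k<n. 8/\<theta> * (vec_norm_sq (crow k Yh - crow k Y) + vec_norm_sq ((K - Kh) *\<^sub>v crow k (Y * G))))"
    using quad_form_perturbed_solution_row_le[OF th K Kh X Xh hK hKh lb fsd] XK XKh
    by (intro sum_mono) (simp add: rows crow_def)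
  also have "\<dots> = 8/\<theta> * (fro_norm_sq (Yh - Y) + (\<Sum>k<n. vec_norm_sq ((K - Kh) *\<^sub>v crow k (Y * G))))"
    unfolding fsY[symmetric] sum.distrib[symmetric] by (rule sum_distrib_left[symmetric])
  finally show ?thesis unfolding crow_def .
qed

lemma sum_vec_norm_sq_mult_cnj_rows_le:
  assumes Dl: "Dl \<in> carrier_mat n n" and X: "X \<in> carrier_mat n n"
   and opb: "\<And>u. u \<in> carrier_vec n \<Longrightarrow> vec_norm_sq (X *\<^sub>v u) \<le> K * vec_norm_sq u"
  shows "(\<Sum>k<n. vec_norm_sq (Dl *\<^sub>v vec n (\<lambda>j. cnj (X$$(k,j))))) \<le> K * fro_norm_sq Dl"
proof -
  define d where "d i = vec n (\<lambda>j. cnj (Dl$$(i,j)))" for i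
  have dc: "d i \<in> carrier_vec n" for i unfolding d_def by simp
  have "(\<Sum>k<n. vec_norm_sq (Dl *\<^sub>v vec n (\<lambda>j. cnj (X$$(k,j))))) =
      (\<Sum>k<n. \<Sum>i<n. (cmod (\<Sum>j<n. Dl$$(i,j) * cnj (X$$(k,j))))\<^sup>2)"
  proof (intro sum.cong refl)
    fix k
    have "vec_norm_sq (Dl *\<^sub>v vec n (\<lambda>j. cnj (X$$(k,j)))) = (\<Sum>i<n. (cmod ((Dl *\<^sub>v vec n (\<lambda>j. cnj (X$$(k,j))))$i))\<^sup>2)"
      unfolding vec_norm_sq_def using Dl by simp
    also have "\<dots> = (\<Sum>i<n. (cmod (\<Sum>j<n. Dl$$(i,j) * cnj (X$$(k,j))))\<^sup>2)"
      by (intro sum.cong refl, subst mult_mat_vec_index_sum[OF Dl, of "vec n (\<lambda>j. cnj (X$$(k,j)))"]) auto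
    finally show "vec_norm_sq (Dl *\<^sub>v vec n (\<lambda>j. cnj (X$$(k,j)))) = (\<Sum>i<n. (cmod (\<Sum>j<n. Dl$$(i,j) * cnj (X$$(k,j))))\<^sup>2)" .
  qed
  also have "\<dots> = (\<Sum>i<n. \<Sum>k<n. (cmod (\<Sum>j<n. Dl$$(i,j) * cnj (X$$(k,j))))\<^sup>2)"
    by (rule sum.swap)
  also have "\<dots> = (\<Sum>i<n. vec_norm_sq (X *\<^sub>v d i))"
  proof (intro sum.cong refl)
    fix i
    have "vec_norm_sq (X *\<^sub>v d i) = (\<Sum>k<n. (cmod ((X *\<^sub>v d i)$k))\<^sup>2)" unfolding vec_norm_sq_def using X by simp
    also have "\<dots> = (\<Sum>k<n. (cmod (\<Sum>j<n. X$$(k,j) * cnj (Dl$$(i,j))))\<^sup>2)"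
      by (intro sum.cong refl, subst mult_mat_vec_index_sum[OF X dc]) (auto simp: d_def)
    also have "\<dots> = (\<Sum>k<n. (cmod (\<Sum>j<n. Dl$$(i,j) * cnj (X$$(k,j))))\<^sup>2)"
    proof (intro sum.cong refl)
      fix k
      have e: "cnj (\<Sum>j<n. Dl$$(i,j) * cnj (X$$(k,j))) = (\<Sum>j<n. X$$(k,j) * cnj (Dl$$(i,j)))"
        by (simp add: mult.commute)
      show "(cmod (\<Sum>j<n. X$$(k,j) * cnj (Dl$$(i,j))))\<^sup>2 = (cmod (\<Sum>j<n. Dl$$(i,j) * cnj (X$$(k,j))))\<^sup>2"
        by (simp only: e[symmetric] complex_mod_cnj)
    qed
    finally show "(\<Sum>k<n. (cmod (\<Sum>j<n. Dl$$(i,j) * cnj (X$$(k,j))))\<^sup>2) = vec_norm_sq (X *\<^sub>v d i)" by simp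
  qed
  also have "\<dots> \<le> (\<Sum>i<n. K * vec_norm_sq (d i))" by (intro sum_mono opb dc)
  also have "\<dots> = K * fro_norm_sq Dl"
    unfolding fro_norm_sq_def vec_norm_sq_def d_def using Dl by (simp add: sum_distrib_left)
  finally show ?thesis .
qed

lemma vec_norm_sq_mult_diagonal_le:
  assumes Dg: "Dg \<in> carrier_mat n n"
   and off: "\<And>i j. i < n \<Longrightarrow> j < n \<Longrightarrow> i \<noteq> j \<Longrightarrow> Dg$$(i,j) = 0"
   and dg: "\<And>i. i < n \<Longrightarrow> (cmod (Dg$$(i,i)))\<^sup>2 \<le> L"
   and w: "w \<in> carrier_vec n"
  shows "vec_norm_sq (Dg *\<^sub>v w) \<le> L * vec_norm_sq w"
proof -
  have "vec_norm_sq (Dg *\<^sub>v w) = (\<Sum>i<n. (cmod ((Dg *\<^sub>v w)$i))\<^sup>2)" unfolding vec_norm_sq_def using Dg by simp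
  also have "\<dots> = (\<Sum>i<n. (cmod (Dg$$(i,i) * w$i))\<^sup>2)"
  proof (intro sum.cong refl)
    fix i assume i: "i \<in> {..<n}"
    have "(Dg *\<^sub>v w)$i = (\<Sum>j<n. Dg$$(i,j) * w$j)" using mult_mat_vec_index_sum[OF Dg w] i by simp
    also have "\<dots> = (\<Sum>j<n. if j = i then Dg$$(i,i) * w$i else 0)"
      using i off by (intro sum.cong refl) auto
    also have "\<dots> = Dg$$(i,i) * w$i" using i by (simp add: sum.delta')
    finally show "(cmod ((Dg *\<^sub>v w)$i))\<^sup>2 = (cmod (Dg$$(i,i) * w$i))\<^sup>2" by simp
  qed
  also have "\<dots> \<le> (\<Sum>i<n. L * (cmod (w$i))\<^sup>2)"
    using dg by (intro sum_mono) (auto simp: norm_mult power_mult_distrib intro!: mult_right_mono)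
  also have "\<dots> = L * vec_norm_sq w" unfolding vec_norm_sq_def using w by (simp add: sum_distrib_left)
  finally show ?thesis .
qed

lemma arcsin_diff_sq_le:
  fixes a b h :: real
  assumes h: "0 < h" "h \<le> 1" and a: "\<bar>a\<bar> \<le> 1 - h" and b: "\<bar>b\<bar> \<le> 1 - h"
  shows "(arcsin a - arcsin b)\<^sup>2 \<le> (a - b)\<^sup>2 / h"
proof -
  have main: "(arcsin v - arcsin u)\<^sup>2 \<le> (v - u)\<^sup>2 / h"
    if uv: "u < v" "\<bar>u\<bar> \<le> 1 - h" "\<bar>v\<bar> \<le> 1 - h" for u v
  proof -
    have "\<exists>z. u < z \<and> z < v \<and> arcsin v - arcsin u = (v - u) * inverse (sqrt (1 - z\<^sup>2))"
    proof (rule MVT2[OF uv(1)])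
      fix x assume "u \<le> x" "x \<le> v"
      hence "-1 < x" "x < 1" using uv h by auto
      thus "DERIV arcsin x :> inverse (sqrt (1 - x\<^sup>2))" by (rule DERIV_arcsin)
    qed
    then obtain z where z: "u < z" "z < v" and eq: "arcsin v - arcsin u = (v - u) * inverse (sqrt (1 - z\<^sup>2))"
      by blast
    have za: "\<bar>z\<bar> \<le> 1 - h" using z uv by auto
    have "h \<le> 1 - z\<^sup>2"
    proof -
      have "z\<^sup>2 = \<bar>z\<bar> * \<bar>z\<bar>" by (simp add: power2_eq_square abs_mult_self_eq)
      also have "\<dots> \<le> (1 - h) * 1" using za h by (intro mult_mono) auto
      finally show ?thesis by simp
    qed
    hence pos: "0 < 1 - z\<^sup>2" using h by simp
    have "(arcsin v - arcsin u)\<^sup>2 = (v - u)\<^sup>2 / (1 - z\<^sup>2)"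
      unfolding eq using pos by (simp add: power_mult_distrib power_inverse divide_inverse)
    also have "\<dots> \<le> (v - u)\<^sup>2 / h"
      using pos h \<open>h \<le> 1 - z\<^sup>2\<close> by (intro divide_left_mono) auto
    finally show ?thesis .
  qed
  consider "a < b" | "a = b" | "b < a" by linarith
  thus ?thesis
  proof cases
    case 1
    from main[OF 1 a b] show ?thesis by (simp add: power2_commute)
  next
    case 3
    from main[OF 3 b a] show ?thesis .
  qed simp
qed

lemma inv_sqrt_diff_le:
  fixes p q :: real
  assumes p: "0 < p" and q: "0 < q"
  shows "\<bar>1 / sqrt q - 1 / sqrt p\<bar> \<le> \<bar>p - q\<bar> / (p * sqrt q)"
proof -
  have sp: "0 < sqrt p" and sq: "0 < sqrt q" using p q by auto
  have e1: "1 / sqrt q - 1 / sqrt p = (sqrt p - sqrt q) / (sqrt p * sqrt q)"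
    using sp sq by (simp add: field_simps)
  have e2: "(sqrt p - sqrt q) * (sqrt p + sqrt q) = p - q"
    using p q by (simp add: algebra_simps power2_eq_square[symmetric])
  have "\<bar>sqrt p - sqrt q\<bar> * sqrt p \<le> \<bar>sqrt p - sqrt q\<bar> * (sqrt p + sqrt q)"
    using sq by (intro mult_left_mono) auto
  also have "\<dots> = \<bar>p - q\<bar>" using e2 sp sq by (metis abs_mult abs_of_pos add_pos_pos)
  finally have b: "\<bar>sqrt p - sqrt q\<bar> \<le> \<bar>p - q\<bar> / sqrt p" using sp by (simp add: field_simps)
  have "\<bar>1 / sqrt q - 1 / sqrt p\<bar> = \<bar>sqrt p - sqrt q\<bar> / (sqrt p * sqrt q)"
    unfolding e1 using sp sq by (simp add: abs_divide abs_mult)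
  also have "\<dots> \<le> (\<bar>p - q\<bar> / sqrt p) / (sqrt p * sqrt q)"
    using b sp sq by (intro divide_right_mono) auto
  also have "\<dots> = \<bar>p - q\<bar> / (p * sqrt q)" using sp sq p
    by (simp add: field_simps power2_eq_square[symmetric])
  finally show ?thesis .
qed

lemma mult_relative_perturb:
  fixes di dj hi hj e \<theta> :: real
  assumes th: "0 < \<theta>" and di: "\<theta> \<le> di" and dj: "\<theta> \<le> dj"
    and hi: "\<bar>hi - di\<bar> \<le> e" and hj: "\<bar>hj - dj\<bar> \<le> e" and e: "e \<le> \<theta>/2"
  shows "\<bar>di * dj - hi * hj\<bar> / (di * dj) \<le> 3 * e / \<theta>"
proof -
  have hi2: "\<theta>/2 \<le> hi" and hile: "hi \<le> 2 * di" using hi e di th by auto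
  have "di * dj - hi * hj = (di - hi) * dj + hi * (dj - hj)" by (simp add: algebra_simps)
  hence "\<bar>di * dj - hi * hj\<bar> \<le> \<bar>di - hi\<bar> * dj + hi * \<bar>dj - hj\<bar>"
    using th dj hi2 abs_triangle_ineq[of "(di - hi) * dj" "hi * (dj - hj)"] by (simp add: abs_mult)
  also have "\<dots> \<le> e * dj + 2 * di * e"
    using hi hj hile th dj hi2 by (intro add_mono mult_mono) (auto simp: abs_minus_commute)
  finally have "\<bar>di * dj - hi * hj\<bar> / (di * dj) \<le> (e * dj + 2 * di * e) / (di * dj)"
    using th di dj by (intro divide_right_mono) auto
  also have "\<dots> = e / di + 2 * e / dj" using th di dj by (simp add: field_simps)
  also have "\<dots> \<le> e / \<theta> + 2 * e / \<theta>"
    using hi di dj th by (intro add_mono divide_left_mono) auto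
  finally show ?thesis by simp
qed

lemma inv_sqrt_mult_perturb:
  fixes di dj hi hj e \<theta> :: real
  assumes th: "0 < \<theta>" and di: "\<theta> \<le> di" and dj: "\<theta> \<le> dj"
    and hi: "\<bar>hi - di\<bar> \<le> e" and hj: "\<bar>hj - dj\<bar> \<le> e" and e: "e \<le> \<theta>/2"
  shows "\<bar>1 / (sqrt hi * sqrt hj) - 1 / (sqrt di * sqrt dj)\<bar> \<le> 6 * e / \<theta>\<^sup>2"
    and "0 < 1 / (sqrt hi * sqrt hj)" "1 / (sqrt hi * sqrt hj) \<le> 2 / \<theta>"
proof -
  define p where "p = di * dj"
  define q where "q = hi * hj"
  have p: "0 < p" unfolding p_def using th di dj by simp
  have q2: "(\<theta>/2)\<^sup>2 \<le> q" unfolding q_def power2_eq_square using hi hj e di dj th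
    by (intro mult_mono) auto
  moreover have "0 < (\<theta>/2)\<^sup>2" using th by simp
  ultimately have q: "0 < q" by linarith
  have sq: "\<theta>/2 \<le> sqrt q" using q2 th by (metis real_le_rsqrt)
  have ss: "sqrt hi * sqrt hj = sqrt q" "sqrt di * sqrt dj = sqrt p"
    unfolding p_def q_def by (simp_all add: real_sqrt_mult)
  have "\<bar>1 / sqrt q - 1 / sqrt p\<bar> \<le> \<bar>p - q\<bar> / (p * sqrt q)" by (rule inv_sqrt_diff_le[OF p q])
  also have "\<dots> = (\<bar>p - q\<bar> / p) / sqrt q" by simp
  also have "\<dots> \<le> (3 * e / \<theta>) / (\<theta>/2)"
  proof (rule frac_le)
    show "\<bar>p - q\<bar> / p \<le> 3 * e / \<theta>"
      unfolding p_def q_def by (rule mult_relative_perturb[OF th di dj hi hj e])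
  qed (use sq th hi in auto)
  also have "\<dots> = 6 * e / \<theta>\<^sup>2" by (simp add: power2_eq_square)
  finally show "\<bar>1 / (sqrt hi * sqrt hj) - 1 / (sqrt di * sqrt dj)\<bar> \<le> 6 * e / \<theta>\<^sup>2" unfolding ss .
  show "0 < 1 / (sqrt hi * sqrt hj)" unfolding ss using q by simp
  show "1 / (sqrt hi * sqrt hj) \<le> 2 / \<theta>" unfolding ss using sq th
    using real_sqrt_gt_zero[OF q] by (simp add: field_simps)
qed

lemma inv_sqrt_perturb:
  fixes d h e \<theta> :: real
  assumes th: "0 < \<theta>" "\<theta> \<le> 1" and d: "\<theta> \<le> d" and h: "\<bar>h - d\<bar> \<le> e" and e: "e \<le> \<theta>/2"
  shows "\<bar>1 / sqrt h - 1 / sqrt d\<bar> \<le> 2 * e / \<theta>\<^sup>2"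
proof -
  have h2: "\<theta>/2 \<le> h" using h e d by auto
  have hp: "0 < h" using h2 th by simp
  have dp: "0 < d" using d th by simp
  have sq: "\<theta>/2 \<le> sqrt h"
  proof -
    have "\<theta>/2 \<le> sqrt (\<theta>/2)" using th by (intro real_le_rsqrt) (auto simp: power2_eq_square)
    also have "\<dots> \<le> sqrt h" using h2 by simp
    finally show ?thesis .
  qed
  have "\<bar>1 / sqrt h - 1 / sqrt d\<bar> \<le> \<bar>d - h\<bar> / (d * sqrt h)" by (rule inv_sqrt_diff_le[OF dp hp])
  also have "\<dots> \<le> e / (\<theta> * (\<theta>/2))"
    using h d th sq dp by (intro frac_le mult_mono) (auto simp: abs_minus_commute)
  also have "\<dots> = 2 * e / \<theta>\<^sup>2" by (simp add: power2_eq_square)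
  finally show ?thesis .
qed

section \<open>The arcsine map\<close>

definition normalized_entry :: "complex mat \<Rightarrow> nat \<Rightarrow> nat \<Rightarrow> complex" where
  "normalized_entry B i j =
     B $$ (i,j) / complex_of_real (sqrt (Re (B $$ (i,i))) * sqrt (Re (B $$ (j,j))))"

definition arcsine_entry :: "complex \<Rightarrow> complex" where
  "arcsine_entry z =
     complex_of_real (2 / pi) * (complex_of_real (arcsin (Re z)) + \<i> * complex_of_real (arcsin (Im z)))"

lemma diag_inv_sqrt_carrier: "B \<in> carrier_mat n n \<Longrightarrow> diag_inv_sqrt B \<in> carrier_mat n n"
  unfolding diag_inv_sqrt_def by auto

lemma diag_inv_sqrt_entry:
  "B \<in> carrier_mat n n \<Longrightarrow> i < n \<Longrightarrow> j < n \<Longrightarrow>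
   diag_inv_sqrt B $$ (i,j) = (if i = j then complex_of_real (1 / sqrt (Re (B$$(i,i)))) else 0)"
  unfolding diag_inv_sqrt_def by auto

lemma P_arcsine_carrier: "B \<in> carrier_mat n n \<Longrightarrow> P_arcsine B \<in> carrier_mat n n"
  unfolding P_arcsine_def by auto

lemma P_arcsine_entry:
  "B \<in> carrier_mat n n \<Longrightarrow> i < n \<Longrightarrow> j < n \<Longrightarrow>
   P_arcsine B $$ (i,j) = arcsine_entry (normalized_entry B i j)"
  unfolding P_arcsine_def arcsine_entry_def normalized_entry_def by auto

lemma diag_inv_sqrt_mult_entry:
  assumes B: "B \<in> carrier_mat n n" and i: "i < n" and j: "j < n"
  shows "(diag_inv_sqrt B * B * diag_inv_sqrt B) $$ (i,j) = normalized_entry B i j"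
proof -
  have Dg: "diag_inv_sqrt B \<in> carrier_mat n n" by (rule diag_inv_sqrt_carrier[OF B])
  have DB: "diag_inv_sqrt B * B \<in> carrier_mat n n" using Dg B by simp
  have e1: "(diag_inv_sqrt B * B) $$ (i,l) = complex_of_real (1 / sqrt (Re (B$$(i,i)))) * B$$(i,l)"
    if l: "l < n" for l
  proof -
    have "(diag_inv_sqrt B * B) $$ (i,l) = (\<Sum>k<n. diag_inv_sqrt B $$ (i,k) * B$$(k,l))"
      by (rule mult_mat_index_sum[OF Dg B i l])
    also have "\<dots> = (\<Sum>k<n. if k = i then complex_of_real (1 / sqrt (Re (B$$(i,i)))) * B$$(i,l) else 0)"
      using i by (intro sum.cong refl) (auto simp: diag_inv_sqrt_entry[OF B])
    also have "\<dots> = complex_of_real (1 / sqrt (Re (B$$(i,i)))) * B$$(i,l)" using i by (simp add: sum.delta')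
    finally show ?thesis .
  qed
  have "(diag_inv_sqrt B * B * diag_inv_sqrt B) $$ (i,j) = (\<Sum>l<n. (diag_inv_sqrt B * B) $$ (i,l) * diag_inv_sqrt B $$ (l,j))"
    by (rule mult_mat_index_sum[OF DB Dg i j])
  also have "\<dots> = (\<Sum>l<n. if l = j then (diag_inv_sqrt B * B) $$ (i,j) * complex_of_real (1 / sqrt (Re (B$$(j,j)))) else 0)"
    using j by (intro sum.cong refl) (auto simp: diag_inv_sqrt_entry[OF B])
  also have "\<dots> = (diag_inv_sqrt B * B) $$ (i,j) * complex_of_real (1 / sqrt (Re (B$$(j,j))))"
    using j by (simp add: sum.delta')
  finally show ?thesis using e1[OF j] unfolding normalized_entry_def by (simp add: divide_inverse mult_ac)
qed

lemma normalized_entry_diag: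
  assumes "B $$ (i,i) = complex_of_real d" "0 < d"
  shows "normalized_entry B i i = 1"
  using assms unfolding normalized_entry_def by simp

lemma normalized_entry_hermitian:
  assumes "hermitian_mat B" "B \<in> carrier_mat n n" "i < n" "j < n"
  shows "normalized_entry B j i = cnj (normalized_entry B i j)"
  unfolding normalized_entry_def hermitian_matD[OF assms] by (simp add: mult.commute)

lemma arcsine_entry_cnj:
  assumes "\<bar>Im z\<bar> \<le> 1"
  shows "arcsine_entry (cnj z) = cnj (arcsine_entry z)"
proof -
  have "arcsin (- Im z) = - arcsin (Im z)" using assms by (intro arcsin_minus) auto
  thus ?thesis unfolding arcsine_entry_def by (simp add: complex_eq_iff)
qed

lemma P_arcsine_hermitian:
  assumes B: "B \<in> carrier_mat n n" "hermitian_mat B"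
    and Im_le: "\<And>i j. i < n \<Longrightarrow> j < n \<Longrightarrow> \<bar>Im (normalized_entry B i j)\<bar> \<le> 1"
  shows "hermitian_mat (P_arcsine B)"
proof (rule hermitian_matI[OF P_arcsine_carrier[OF B(1)]])
  fix i j assume ij: "i < n" "j < n"
  show "P_arcsine B $$ (j,i) = cnj (P_arcsine B $$ (i,j))"
    unfolding P_arcsine_entry[OF B(1) ij] P_arcsine_entry[OF B(1) ij(2,1)]
      normalized_entry_hermitian[OF B(2,1) ij]
    by (rule arcsine_entry_cnj[OF Im_le[OF ij]])
qed

lemma arcsine_entry_diff_sq_le:
  assumes h: "0 < h" "h \<le> 1"
    and z: "\<bar>Re z\<bar> \<le> 1 - h" "\<bar>Im z\<bar> \<le> 1 - h" and w: "\<bar>Re w\<bar> \<le> 1 - h" "\<bar>Im w\<bar> \<le> 1 - h"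
  shows "(cmod (arcsine_entry z - arcsine_entry w))\<^sup>2 \<le> (cmod (z - w))\<^sup>2 / h"
proof -
  have "(cmod (arcsine_entry z - arcsine_entry w))\<^sup>2
      = (2/pi)\<^sup>2 * ((arcsin (Re z) - arcsin (Re w))\<^sup>2 + (arcsin (Im z) - arcsin (Im w))\<^sup>2)"
    unfolding arcsine_entry_def cmod_power2 by (simp add: power2_eq_square field_simps)
  also have "\<dots> \<le> 1 * ((Re z - Re w)\<^sup>2 / h + (Im z - Im w)\<^sup>2 / h)"
  proof (intro mult_mono add_mono arcsin_diff_sq_le)
    show "(2/pi)\<^sup>2 \<le> 1" using pi_gt3 by (simp add: power_le_one)
  qed (use h z w in auto)
  also have "\<dots> = (cmod (z - w))\<^sup>2 / h" unfolding cmod_power2 by (simp add: add_divide_distrib)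
  finally show ?thesis .
qed

lemma normalized_entry_perturb:
  fixes B Bh :: "complex mat" and \<theta> e :: real
  assumes th: "0 < \<theta>" and di: "\<theta> \<le> Re (B$$(i,i))" and dj: "\<theta> \<le> Re (B$$(j,j))"
    and hi: "\<bar>Re (Bh$$(i,i)) - Re (B$$(i,i))\<bar> \<le> e" and hj: "\<bar>Re (Bh$$(j,j)) - Re (B$$(j,j))\<bar> \<le> e"
    and e: "e \<le> \<theta>/2"
  shows "cmod (normalized_entry Bh i j - normalized_entry B i j)
      \<le> cmod (Bh$$(i,j) - B$$(i,j)) * (2/\<theta>) + cmod (B$$(i,j)) * (6 * e / \<theta>\<^sup>2)"
    and "(cmod (normalized_entry Bh i j - normalized_entry B i j))\<^sup>2
      \<le> 8 * (cmod (Bh$$(i,j) - B$$(i,j)))\<^sup>2 / \<theta>\<^sup>2 + 72 * e\<^sup>2 * (cmod (B$$(i,j)))\<^sup>2 / \<theta>^4"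
proof -
  define a where "a = 1 / (sqrt (Re (B$$(i,i))) * sqrt (Re (B$$(j,j))))"
  define ah where "ah = 1 / (sqrt (Re (Bh$$(i,i))) * sqrt (Re (Bh$$(j,j))))"
  note ab = inv_sqrt_mult_perturb[OF th di dj hi hj e, folded a_def ah_def]
  have eq: "normalized_entry Bh i j - normalized_entry B i j
      = (Bh$$(i,j) - B$$(i,j)) * of_real ah + B$$(i,j) * of_real (ah - a)"
    unfolding normalized_entry_def a_def ah_def by (simp add: divide_inverse ring_distribs)
  have b1: "cmod ((Bh$$(i,j) - B$$(i,j)) * of_real ah) \<le> cmod (Bh$$(i,j) - B$$(i,j)) * (2/\<theta>)"
  proof -
    have "cmod (Bh$$(i,j) - B$$(i,j)) * ah \<le> cmod (Bh$$(i,j) - B$$(i,j)) * (2/\<theta>)"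
      using ab(3) by (intro mult_left_mono) auto
    thus ?thesis using ab(2) by (simp add: norm_mult)
  qed
  have b2: "cmod (B$$(i,j) * of_real (ah - a)) \<le> cmod (B$$(i,j)) * (6 * e / \<theta>\<^sup>2)"
    unfolding norm_mult norm_of_real using ab(1) by (intro mult_left_mono) auto
  show "cmod (normalized_entry Bh i j - normalized_entry B i j)
      \<le> cmod (Bh$$(i,j) - B$$(i,j)) * (2/\<theta>) + cmod (B$$(i,j)) * (6 * e / \<theta>\<^sup>2)"
    unfolding eq using norm_triangle_ineq b1 b2 by (rule order_trans[OF _ add_mono])
  have "(cmod (normalized_entry Bh i j - normalized_entry B i j))\<^sup>2
      \<le> 2 * (cmod ((Bh$$(i,j) - B$$(i,j)) * of_real ah))\<^sup>2 + 2 * (cmod (B$$(i,j) * of_real (ah - a)))\<^sup>2"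
    unfolding eq by (rule cmod_add_sq_le)
  also have "\<dots> \<le> 2 * (cmod (Bh$$(i,j) - B$$(i,j)) * (2/\<theta>))\<^sup>2 + 2 * (cmod (B$$(i,j)) * (6 * e / \<theta>\<^sup>2))\<^sup>2"
    using b1 b2 by (intro add_mono mult_left_mono power_mono) auto
  also have "\<dots> = 8 * (cmod (Bh$$(i,j) - B$$(i,j)))\<^sup>2 / \<theta>\<^sup>2 + 72 * e\<^sup>2 * (cmod (B$$(i,j)))\<^sup>2 / \<theta>^4"
    by (simp add: power_mult_distrib power_divide field_simps)
  finally show "(cmod (normalized_entry Bh i j - normalized_entry B i j))\<^sup>2
      \<le> 8 * (cmod (Bh$$(i,j) - B$$(i,j)))\<^sup>2 / \<theta>\<^sup>2 + 72 * e\<^sup>2 * (cmod (B$$(i,j)))\<^sup>2 / \<theta>^4" .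
qed

lemma mat_adjoint_scaled_diag_inv_sqrt_carrier:
  "B \<in> carrier_mat n n \<Longrightarrow> mat_adjoint (complex_of_real s \<cdot>\<^sub>m diag_inv_sqrt B) \<in> carrier_mat n n"
  by (intro mat_adjoint_carrier) (auto dest: diag_inv_sqrt_carrier)

lemma mat_adjoint_scaled_diag_inv_sqrt_entry:
  assumes B: "B \<in> carrier_mat n n" and i: "i < n" and j: "j < n"
  shows "mat_adjoint (complex_of_real s \<cdot>\<^sub>m diag_inv_sqrt B) $$ (i,j) =
    (if i = j then complex_of_real (s / sqrt (Re (B$$(i,i)))) else 0)"
proof -
  have C: "complex_of_real s \<cdot>\<^sub>m diag_inv_sqrt B \<in> carrier_mat n n" using diag_inv_sqrt_carrier[OF B] by simp
  show ?thesis
    unfolding mat_adjoint_entry[OF C i j] using i j diag_inv_sqrt_carrier[OF B]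
    by (auto simp: diag_inv_sqrt_entry[OF B])
qed

lemma mult_mat_adjoint_scaled_diag_inv_sqrt_entry:
  assumes B: "B \<in> carrier_mat n n" and Ch: "Ch \<in> carrier_mat n n" and k: "k < n" and j: "j < n"
  shows "(Ch * mat_adjoint (complex_of_real s \<cdot>\<^sub>m diag_inv_sqrt B)) $$ (k,j) =
    Ch$$(k,j) * complex_of_real (s / sqrt (Re (B$$(j,j))))"
proof -
  have "(Ch * mat_adjoint (complex_of_real s \<cdot>\<^sub>m diag_inv_sqrt B)) $$ (k,j) =
      (\<Sum>l<n. Ch$$(k,l) * mat_adjoint (complex_of_real s \<cdot>\<^sub>m diag_inv_sqrt B) $$ (l,j))"
    by (rule mult_mat_index_sum[OF Ch mat_adjoint_scaled_diag_inv_sqrt_carrier[OF B] k j])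
  also have "\<dots> = (\<Sum>l<n. if l = j then Ch$$(k,j) * complex_of_real (s / sqrt (Re (B$$(j,j)))) else 0)"
    using j by (intro sum.cong refl) (auto simp: mat_adjoint_scaled_diag_inv_sqrt_entry[OF B])
  also have "\<dots> = Ch$$(k,j) * complex_of_real (s / sqrt (Re (B$$(j,j))))" using j by (simp add: sum.delta')
  finally show ?thesis .
qed

lemma max_norm_ge_entry:
  assumes A: "A \<in> carrier_mat m n" and i: "i < m" and j: "j < n"
  shows "cmod (A$$(i,j)) \<le> max_norm A"
proof -
  have eq: "{cmod (A $$ (i,j)) | i j. i < dim_row A \<and> j < dim_col A} =
      (\<lambda>(i,j). cmod (A$$(i,j))) ` ({..<m} \<times> {..<n})" using A by auto
  have fin: "finite (insert 0 {cmod (A $$ (i,j)) | i j. i < dim_row A \<and> j < dim_col A})"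
    unfolding eq by simp
  show ?thesis unfolding max_norm_def
    by (rule Max_ge[OF fin]) (use A i j in auto)
qed

section \<open>Perturbation of the arcsine estimator\<close>

lemma estimator_error_arith:
  fixes \<theta> eF F op L :: real
  assumes th: "0 < \<theta>" "\<theta> < 1" and eF: "0 < eF" and op: "0 \<le> op" "op \<le> F"
    and e1: "eF \<le> \<theta>^4/20" and e2: "eF \<le> \<theta>^5 * F/20"
    and L: "L \<le> 8/\<theta> * (5 * eF\<^sup>2/\<theta>^4 + op\<^sup>2/\<theta>^3 * (17 * eF\<^sup>2/\<theta>^6))"
  shows "L \<le> 20 * \<theta> powi (-6) * max 1 op * F * eF"
proof -
  define m where "m = max 1 op"
  have t6: "0 < \<theta>^6" "\<theta>^6 \<le> 1" using th by (auto simp: power_le_one)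
  have m1: "1 \<le> m" "op \<le> m" unfolding m_def by auto
  have "8/\<theta> * (5 * eF\<^sup>2/\<theta>^4 + op\<^sup>2/\<theta>^3 * (17 * eF\<^sup>2/\<theta>^6))
      = 40 * eF * eF / \<theta>^5 + 136 * op\<^sup>2 * eF * eF / \<theta>^10"
    using th by (simp add: field_simps power2_eq_square eval_nat_numeral)
  also have "40 * eF * eF / \<theta>^5 \<le> 40 * eF * (\<theta>^5 * F / 20) / \<theta>^5"
    using e2 eF th by (intro divide_right_mono mult_left_mono) auto
  also have "\<dots> = 2 * F * eF" using th by (simp add: field_simps)
  also have "136 * op\<^sup>2 * eF * eF / \<theta>^10 \<le> 136 * op\<^sup>2 * eF * (\<theta>^4/20) / \<theta>^10"
    using e1 eF th by (intro divide_right_mono mult_left_mono) auto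
  also have "\<dots> = 34/5 * op\<^sup>2 * eF / \<theta>^6" using th by (simp add: field_simps eval_nat_numeral)
  also have "2 * F * eF \<le> 2 * m * F * eF / \<theta>^6"
  proof -
    have "2 * F * eF \<le> 2 * m * F * eF" using m1 op eF by (simp add: mult_right_mono)
    also have "\<dots> \<le> 2 * m * F * eF / \<theta>^6" using t6 m1 op eF by (simp add: le_divide_eq mult_left_le)
    finally show ?thesis .
  qed
  also have "34/5 * op\<^sup>2 * eF / \<theta>^6 \<le> 34/5 * (m * F) * eF / \<theta>^6"
    unfolding power2_eq_square using op m1 eF t6
    by (intro divide_right_mono mult_right_mono mult_left_mono mult_mono) auto
  finally have "L \<le> (2 + 34/5) * m * F * eF / \<theta>^6" using L by (simp add: field_simps)
  also have "\<dots> \<le> 20 * m * F * eF / \<theta>^6"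
    using m1 op eF t6 by (intro divide_right_mono mult_right_mono) auto
  finally show ?thesis unfolding m_def by (simp add: power_int_minus_divide)
qed

locale arcsine_estimator_perturbation =
  fixes M :: nat and N0 \<theta> \<epsilon>F \<epsilon>I :: real
    and Ch Cyhat Cy Cr A Chhat Ahat Crhat :: "complex mat"
  assumes Cy_eq: "Cy = Ch + complex_of_real N0 \<cdot>\<^sub>m 1\<^sub>m M"
    and Cr_eq: "Cr = P_arcsine Cy"
    and A_eq: "A = complex_of_real (sqrt (2 / pi)) \<cdot>\<^sub>m diag_inv_sqrt Cy"
    and Chhat_eq: "Chhat = Cyhat - complex_of_real N0 \<cdot>\<^sub>m 1\<^sub>m M"
    and Ahat_eq: "Ahat = complex_of_real (sqrt (2 / pi)) \<cdot>\<^sub>m diag_inv_sqrt Cyhat"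
    and Crhat_eq: "Crhat = P_arcsine Cyhat"
    and N0_pos: "0 < N0" and Ch_carrier: "Ch \<in> carrier_mat M M" and Ch_psd: "psd_mat Ch"
    and theta_pos: "0 < \<theta>" and theta_less_1: "\<theta> < 1"
    and Cy_off_diag: "\<And>i j. i < M \<Longrightarrow> j < M \<Longrightarrow> i \<noteq> j \<Longrightarrow>
      cmod ((diag_inv_sqrt Cy * Cy * diag_inv_sqrt Cy) $$ (i,j)) \<le> 1 - \<theta>"
    and Cy_diag_ge: "\<And>i. i < M \<Longrightarrow> \<theta> \<le> cmod (Cy $$ (i,i))"
    and lambda_min_Cr: "\<theta> \<le> lambda_min Cr"
    and Cyhat_carrier: "Cyhat \<in> carrier_mat M M" and Cyhat_hermitian: "hermitian_mat Cyhat"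
    and epsF_pos: "0 < \<epsilon>F" and epsI_pos: "0 < \<epsilon>I"
    and fro_norm_err: "fro_norm (Cyhat - Cy) < \<epsilon>F"
    and max_norm_err: "max_norm (Cyhat - Cy) < \<epsilon>I"
    and epsI_le: "\<epsilon>I \<le> 1/100 * Min {\<epsilon>F / fro_norm Cy, \<theta> ^ 3 / max_norm Cy, \<theta>, 1}"
    and epsF_le: "\<epsilon>F \<le> 1/20 * min (\<theta> ^ 4) (\<theta> ^ 6 * fro_norm Ch / (max 1 (op_norm Ch) * op_norm Cy))"
begin

lemma Cy_carrier: "Cy \<in> carrier_mat M M"
  unfolding Cy_eq using Ch_carrier by simp

lemma Cy_entry: "i < M \<Longrightarrow> j < M \<Longrightarrow> Cy$$(i,j) = Ch$$(i,j) + (if i = j then complex_of_real N0 else 0)"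
  unfolding Cy_eq using Ch_carrier by simp

lemma Ch_hermitian: "hermitian_mat Ch"
  using Ch_psd unfolding psd_mat_def by simp

lemma Cy_hermitian: "hermitian_mat Cy"
proof (rule hermitian_matI[OF Cy_carrier])
  fix i j assume ij: "i < M" "j < M"
  show "Cy$$(j,i) = cnj (Cy$$(i,j))"
    using hermitian_matD[OF Ch_hermitian Ch_carrier ij] ij by (simp add: Cy_entry)
qed

lemma Cy_diag: "i < M \<Longrightarrow> Cy$$(i,i) = complex_of_real (Re (Ch$$(i,i)) + N0)"
  using hermitian_mat_diag_real[OF Ch_hermitian Ch_carrier] by (simp add: Cy_entry complex_eq_iff)

lemma Re_Cy_diag_ge:
  assumes i: "i < M" shows "\<theta> \<le> Re (Cy$$(i,i))"
proof -
  have "0 \<le> Re (Ch$$(i,i)) + N0" using psd_mat_diag_nonneg[OF Ch_psd Ch_carrier i] N0_pos by simp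
  hence "cmod (Cy$$(i,i)) = Re (Cy$$(i,i))" unfolding Cy_diag[OF i] norm_of_real by simp
  thus ?thesis using Cy_diag_ge[OF i] by simp
qed

lemma cmod_Ch_le_Cy:
  assumes ij: "i < M" "j < M" shows "cmod (Ch$$(i,j)) \<le> cmod (Cy$$(i,j))"
proof (cases "i = j")
  case True
  have "0 \<le> Re (Ch$$(i,i))" by (rule psd_mat_diag_nonneg[OF Ch_psd Ch_carrier ij(1)])
  moreover have "cmod (Ch$$(i,i)) = \<bar>Re (Ch$$(i,i))\<bar>"
    by (subst hermitian_mat_diag_real[OF Ch_hermitian Ch_carrier ij(1)]) simp
  moreover have "cmod (Cy$$(i,i)) = \<bar>Re (Ch$$(i,i)) + N0\<bar>"
    by (simp only: Cy_diag[OF ij(1)] norm_of_real)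
  ultimately show ?thesis using True N0_pos by simp
qed (use ij in \<open>simp add: Cy_entry\<close>)

lemma M_pos: "0 < M"
proof (rule ccontr)
  assume "\<not> 0 < M"
  hence "fro_norm Cy = 0" unfolding fro_norm_def using Cy_carrier by simp
  moreover have "Min {\<epsilon>F / fro_norm Cy, \<theta> ^ 3 / max_norm Cy, \<theta>, 1} \<le> \<epsilon>F / fro_norm Cy" by simp
  ultimately show False using epsI_le epsI_pos by simp
qed

lemma err_entry_le:
  assumes "i < M" "j < M" shows "cmod (Cyhat$$(i,j) - Cy$$(i,j)) \<le> \<epsilon>I"
proof -
  have "cmod ((Cyhat - Cy)$$(i,j)) \<le> max_norm (Cyhat - Cy)"
    by (rule max_norm_ge_entry[OF minus_carrier_mat[OF Cy_carrier]]) (use assms in auto)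
  thus ?thesis using max_norm_err assms Cy_carrier by simp
qed

lemma err_fro_norm_sq: "(\<Sum>i<M. \<Sum>j<M. (cmod (Cyhat$$(i,j) - Cy$$(i,j)))\<^sup>2) \<le> \<epsilon>F\<^sup>2"
proof -
  have "fro_norm_sq (Cyhat - Cy) = (fro_norm (Cyhat - Cy))\<^sup>2" by (simp add: fro_norm_eq_sqrt)
  also have "\<dots> \<le> \<epsilon>F\<^sup>2" using fro_norm_err by (intro power_mono) (auto simp: fro_norm_eq_sqrt)
  finally show ?thesis unfolding fro_norm_sq_def using Cy_carrier Cyhat_carrier by simp
qed

lemma theta_le_norms: "\<theta>\<^sup>2 \<le> fro_norm_sq Cy" "\<theta> \<le> max_norm Cy" "\<theta> \<le> op_norm Cy"
proof -
  have "\<theta>\<^sup>2 \<le> (cmod (Cy$$(0,0)))\<^sup>2" using Cy_diag_ge[OF M_pos] theta_pos by (intro power_mono) auto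
  also have "\<dots> \<le> fro_norm_sq Cy" by (rule fro_norm_sq_ge_entry[OF Cy_carrier M_pos M_pos])
  finally show "\<theta>\<^sup>2 \<le> fro_norm_sq Cy" .
  show "\<theta> \<le> max_norm Cy" using max_norm_ge_entry[OF Cy_carrier M_pos M_pos] Cy_diag_ge[OF M_pos] by simp
  have "\<theta> \<le> cmod ((Cy *\<^sub>v unit_vec M 0) $ 0)"
    using Cy_diag_ge[OF M_pos] Cy_carrier M_pos by simp
  also have "\<dots> \<le> vec_norm (Cy *\<^sub>v unit_vec M 0)"
    using vec_norm_sq_ge_entry[of "Cy *\<^sub>v unit_vec M 0" M 0] Cy_carrier M_pos
    by (simp add: vec_norm_eq_sqrt real_le_rsqrt)
  also have "\<dots> \<le> op_norm Cy"
    by (rule vec_norm_mult_le_op_norm[OF Cy_carrier]) (simp_all add: vec_norm_sq_unit_vec[OF M_pos])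
  finally show "\<theta> \<le> op_norm Cy" .
qed

lemma epsI_budget:
  shows "\<epsilon>I\<^sup>2 * fro_norm_sq Cy \<le> \<epsilon>F\<^sup>2 / 10000" and "\<epsilon>I * max_norm Cy \<le> \<theta>^3 / 100"
    and "\<epsilon>I \<le> \<theta>\<^sup>2 / 100" and "\<epsilon>I \<le> \<theta>/2"
proof -
  have fro_pos: "0 < fro_norm Cy"
    using less_le_trans[OF zero_less_power[OF theta_pos] theta_le_norms(1)]
    unfolding fro_norm_eq_sqrt by simp
  have "Min {\<epsilon>F / fro_norm Cy, \<theta> ^ 3 / max_norm Cy, \<theta>, 1} \<le> \<epsilon>F / fro_norm Cy"
    "Min {\<epsilon>F / fro_norm Cy, \<theta> ^ 3 / max_norm Cy, \<theta>, 1} \<le> \<theta> ^ 3 / max_norm Cy"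
    "Min {\<epsilon>F / fro_norm Cy, \<theta> ^ 3 / max_norm Cy, \<theta>, 1} \<le> \<theta>" by simp_all
  hence I1: "\<epsilon>I * fro_norm Cy \<le> \<epsilon>F / 100" and I2: "\<epsilon>I * max_norm Cy \<le> \<theta>^3 / 100"
    and I3: "\<epsilon>I \<le> \<theta> / 100"
    using epsI_le fro_pos theta_le_norms(2) theta_pos by (simp_all add: field_simps)
  have "(\<epsilon>I * fro_norm Cy)\<^sup>2 \<le> (\<epsilon>F / 100)\<^sup>2" using I1 epsI_pos fro_pos by (intro power_mono) auto
  thus "\<epsilon>I\<^sup>2 * fro_norm_sq Cy \<le> \<epsilon>F\<^sup>2 / 10000"
    by (simp add: power_mult_distrib fro_norm_eq_sqrt power_divide)
  show "\<epsilon>I * max_norm Cy \<le> \<theta>^3 / 100" by (rule I2)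
  have "\<epsilon>I * \<theta> \<le> \<epsilon>I * max_norm Cy" using theta_le_norms(2) epsI_pos by simp
  also note I2
  also have "\<theta>^3 / 100 = \<theta>\<^sup>2 / 100 * \<theta>" by (simp add: power2_eq_square power3_eq_cube)
  finally show "\<epsilon>I \<le> \<theta>\<^sup>2 / 100" using theta_pos by simp
  show "\<epsilon>I \<le> \<theta>/2" using I3 theta_pos by simp
qed

lemma epsF_budget: "\<epsilon>F \<le> \<theta>^4 / 20" "\<epsilon>F \<le> \<theta>^5 * fro_norm Ch / 20"
proof -
  show "\<epsilon>F \<le> \<theta>^4 / 20" using epsF_le by simp
  have "\<theta> \<le> max 1 (op_norm Ch) * op_norm Cy"
    using theta_le_norms(3) theta_pos by (metis max.cobounded1 mult_1 mult_right_mono order_trans less_imp_le)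
  hence "\<theta>^6 * fro_norm Ch / (max 1 (op_norm Ch) * op_norm Cy) \<le> \<theta>^6 * fro_norm Ch / \<theta>"
    using theta_pos by (intro divide_left_mono) (auto simp: fro_norm_eq_sqrt)
  also have "\<dots> = \<theta>^5 * fro_norm Ch" using theta_pos by (simp add: eval_nat_numeral)
  finally show "\<epsilon>F \<le> \<theta>^5 * fro_norm Ch / 20" using epsF_le by simp
qed

lemma Re_Cyhat_diag:
  assumes i: "i < M"
  shows "\<bar>Re (Cyhat$$(i,i)) - Re (Cy$$(i,i))\<bar> \<le> \<epsilon>I" and "\<theta>/2 \<le> Re (Cyhat$$(i,i))"
proof -
  show "\<bar>Re (Cyhat$$(i,i)) - Re (Cy$$(i,i))\<bar> \<le> \<epsilon>I"
    using abs_Re_le_cmod[of "Cyhat$$(i,i) - Cy$$(i,i)"] err_entry_le[OF i i] by simp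
  thus "\<theta>/2 \<le> Re (Cyhat$$(i,i))" using Re_Cy_diag_ge[OF i] epsI_budget(4) by linarith
qed

lemma normalized_entry_diag_eq_1:
  assumes i: "i < M"
  shows "normalized_entry Cy i i = 1" and "normalized_entry Cyhat i i = 1"
proof -
  show "normalized_entry Cy i i = 1"
    using Cy_diag[OF i] Re_Cy_diag_ge[OF i] theta_pos
    by (intro normalized_entry_diag[where d = "Re (Ch$$(i,i)) + N0"]) (simp_all add: Cy_diag[OF i])
  show "normalized_entry Cyhat i i = 1"
    using hermitian_mat_diag_real[OF Cyhat_hermitian Cyhat_carrier i] Re_Cyhat_diag(2)[OF i] theta_pos
    by (intro normalized_entry_diag[where d = "Re (Cyhat$$(i,i))"]) auto
qed

lemma normalized_entry_err:
  assumes ij: "i < M" "j < M"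
  shows "cmod (normalized_entry Cyhat i j - normalized_entry Cy i j) \<le> \<theta>/2"
    and "(cmod (normalized_entry Cyhat i j - normalized_entry Cy i j))\<^sup>2
      \<le> 8 * (cmod (Cyhat$$(i,j) - Cy$$(i,j)))\<^sup>2 / \<theta>\<^sup>2 + 72 * \<epsilon>I\<^sup>2 * (cmod (Cy$$(i,j)))\<^sup>2 / \<theta>^4"
proof -
  note ne = normalized_entry_perturb[OF theta_pos Re_Cy_diag_ge[OF ij(1)] Re_Cy_diag_ge[OF ij(2)]
      Re_Cyhat_diag(1)[OF ij(1)] Re_Cyhat_diag(1)[OF ij(2)] epsI_budget(4)]
  have "cmod (normalized_entry Cyhat i j - normalized_entry Cy i j)
      \<le> \<epsilon>I * (2/\<theta>) + max_norm Cy * (6 * \<epsilon>I / \<theta>\<^sup>2)"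
    using ne(1) err_entry_le[OF ij] max_norm_ge_entry[OF Cy_carrier ij] theta_pos epsI_pos
    by (smt (verit, best) divide_nonneg_nonneg mult_right_mono zero_le_power)
  also have "\<dots> = 2 * \<epsilon>I / \<theta> + 6 * (\<epsilon>I * max_norm Cy) / \<theta>\<^sup>2" by (simp add: field_simps)
  also have "\<dots> \<le> 2 * (\<theta>\<^sup>2/100) / \<theta> + 6 * (\<theta>^3/100) / \<theta>\<^sup>2"
    using epsI_budget(2,3) theta_pos by (intro add_mono divide_right_mono mult_left_mono) auto
  also have "\<dots> \<le> \<theta>/2" using theta_pos by (simp add: field_simps power2_eq_square power3_eq_cube)
  finally show "cmod (normalized_entry Cyhat i j - normalized_entry Cy i j) \<le> \<theta>/2" .
  show "(cmod (normalized_entry Cyhat i j - normalized_entry Cy i j))\<^sup>2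
      \<le> 8 * (cmod (Cyhat$$(i,j) - Cy$$(i,j)))\<^sup>2 / \<theta>\<^sup>2 + 72 * \<epsilon>I\<^sup>2 * (cmod (Cy$$(i,j)))\<^sup>2 / \<theta>^4"
    by (rule ne(2))
qed

lemma normalized_entry_off_diag:
  assumes ij: "i < M" "j < M" "i \<noteq> j"
  shows "cmod (normalized_entry Cy i j) \<le> 1 - \<theta>" and "cmod (normalized_entry Cyhat i j) \<le> 1 - \<theta>/2"
proof -
  show Cy: "cmod (normalized_entry Cy i j) \<le> 1 - \<theta>"
    using Cy_off_diag[OF ij] diag_inv_sqrt_mult_entry[OF Cy_carrier ij(1,2)] by simp
  have "cmod (normalized_entry Cyhat i j)
      \<le> cmod (normalized_entry Cy i j) + cmod (normalized_entry Cyhat i j - normalized_entry Cy i j)"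
    by (rule norm_triangle_sub)
  thus "cmod (normalized_entry Cyhat i j) \<le> 1 - \<theta>/2" using Cy normalized_entry_err(1)[OF ij(1,2)] by linarith
qed

lemma normalized_entry_le_1:
  assumes ij: "i < M" "j < M"
  shows "cmod (normalized_entry Cy i j) \<le> 1" and "cmod (normalized_entry Cyhat i j) \<le> 1"
  using normalized_entry_diag_eq_1[OF ij(1)] normalized_entry_off_diag[OF ij] theta_pos
  by (cases "i = j"; simp)+

lemma Cr_carrier: "Cr \<in> carrier_mat M M" and Crhat_carrier: "Crhat \<in> carrier_mat M M"
  unfolding Cr_eq Crhat_eq by (simp_all add: P_arcsine_carrier Cy_carrier Cyhat_carrier)

lemma Cr_hermitian: "hermitian_mat Cr" and Crhat_hermitian: "hermitian_mat Crhat"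
  unfolding Cr_eq Crhat_eq
  using normalized_entry_le_1 abs_Im_le_cmod order_trans
  by (blast intro: P_arcsine_hermitian Cy_carrier Cy_hermitian Cyhat_carrier Cyhat_hermitian)+

lemma Cr_err_entry:
  assumes ij: "i < M" "j < M"
  shows "(cmod (Cr$$(i,j) - Crhat$$(i,j)))\<^sup>2
    \<le> 16 / \<theta>^3 * (cmod (Cyhat$$(i,j) - Cy$$(i,j)))\<^sup>2 + 144 * \<epsilon>I\<^sup>2 / \<theta>^5 * (cmod (Cy$$(i,j)))\<^sup>2"
proof (cases "i = j")
  case True
  thus ?thesis unfolding Cr_eq Crhat_eq P_arcsine_entry[OF Cy_carrier ij] P_arcsine_entry[OF Cyhat_carrier ij]
    using normalized_entry_diag_eq_1[OF ij(1)] theta_pos by simp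
next
  case False
  have bounds: "\<bar>Re z\<bar> \<le> 1 - \<theta>/2" "\<bar>Im z\<bar> \<le> 1 - \<theta>/2" if "cmod z \<le> 1 - \<theta>/2" for z
    using that abs_Re_le_cmod[of z] abs_Im_le_cmod[of z] by linarith+
  have Cy_le: "cmod (normalized_entry Cy i j) \<le> 1 - \<theta>/2"
    using normalized_entry_off_diag(1)[OF ij False] theta_pos by linarith
  have "(cmod (Cr$$(i,j) - Crhat$$(i,j)))\<^sup>2
      \<le> (cmod (normalized_entry Cy i j - normalized_entry Cyhat i j))\<^sup>2 / (\<theta>/2)"
    unfolding Cr_eq Crhat_eq P_arcsine_entry[OF Cy_carrier ij] P_arcsine_entry[OF Cyhat_carrier ij]
    using theta_pos theta_less_1 bounds[OF Cy_le] bounds[OF normalized_entry_off_diag(2)[OF ij False]]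
    by (intro arcsine_entry_diff_sq_le) auto
  also have "\<dots> \<le> (8 * (cmod (Cyhat$$(i,j) - Cy$$(i,j)))\<^sup>2 / \<theta>\<^sup>2
      + 72 * \<epsilon>I\<^sup>2 * (cmod (Cy$$(i,j)))\<^sup>2 / \<theta>^4) / (\<theta>/2)"
    using normalized_entry_err(2)[OF ij] theta_pos
    by (intro divide_right_mono) (auto simp: norm_minus_commute)
  also have "\<dots> = 16 / \<theta>^3 * (cmod (Cyhat$$(i,j) - Cy$$(i,j)))\<^sup>2 + 144 * \<epsilon>I\<^sup>2 / \<theta>^5 * (cmod (Cy$$(i,j)))\<^sup>2"
    using theta_pos by (simp add: field_simps eval_nat_numeral)
  finally show ?thesis .
qed

lemma fro_norm_sq_Cr_err: "fro_norm_sq (Cr - Crhat) \<le> 17 * \<epsilon>F\<^sup>2 / \<theta>^6"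
proof -
  have "fro_norm_sq (Cr - Crhat) = (\<Sum>i<M. \<Sum>j<M. (cmod (Cr$$(i,j) - Crhat$$(i,j)))\<^sup>2)"
    unfolding fro_norm_sq_def using Cr_carrier Crhat_carrier by (auto intro!: sum.cong)
  also have "\<dots> \<le> (\<Sum>i<M. \<Sum>j<M. 16 / \<theta>^3 * (cmod (Cyhat$$(i,j) - Cy$$(i,j)))\<^sup>2
      + 144 * \<epsilon>I\<^sup>2 / \<theta>^5 * (cmod (Cy$$(i,j)))\<^sup>2)"
    by (intro sum_mono Cr_err_entry) auto
  also have "\<dots> = 16 / \<theta>^3 * (\<Sum>i<M. \<Sum>j<M. (cmod (Cyhat$$(i,j) - Cy$$(i,j)))\<^sup>2)
      + 144 / \<theta>^5 * (\<epsilon>I\<^sup>2 * fro_norm_sq Cy)"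
    unfolding fro_norm_sq_def using Cy_carrier by (simp add: sum_distrib_left sum.distrib mult_ac)
  also have "\<dots> \<le> 16 / \<theta>^3 * \<epsilon>F\<^sup>2 + 144 / \<theta>^5 * (\<epsilon>F\<^sup>2 / 10000)"
    using err_fro_norm_sq epsI_budget(1) theta_pos by (intro add_mono mult_left_mono) auto
  also have "\<dots> \<le> 16 / \<theta>^6 * \<epsilon>F\<^sup>2 + 144 / \<theta>^6 * (\<epsilon>F\<^sup>2 / 10000)"
    using theta_pos theta_less_1
    by (intro add_mono mult_right_mono divide_left_mono power_decreasing) auto
  also have "\<dots> = (16 + 144 / 10000) * \<epsilon>F\<^sup>2 / \<theta>^6" by (simp add: field_simps)
  also have "\<dots> \<le> 17 * \<epsilon>F\<^sup>2 / \<theta>^6" using theta_pos by (intro divide_right_mono mult_right_mono) auto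
  finally show ?thesis .
qed

lemma fro_norm_sq_Cr_err_small: "fro_norm_sq (Cr - Crhat) \<le> \<theta>\<^sup>2/4"
proof -
  have "\<epsilon>F\<^sup>2 \<le> (\<theta>^4/20)\<^sup>2" using epsF_budget(1) epsF_pos by (intro power_mono) auto
  hence "17 * \<epsilon>F\<^sup>2 / \<theta>^6 \<le> 17 * (\<theta>^4/20)\<^sup>2 / \<theta>^6" using theta_pos by (intro divide_right_mono) auto
  also have "\<dots> \<le> \<theta>\<^sup>2/4" using theta_pos by (simp add: field_simps eval_nat_numeral)
  finally show ?thesis using fro_norm_sq_Cr_err by linarith
qed

lemma Cr_quad_form_ge: "x \<in> carrier_vec M \<Longrightarrow> \<theta> * vec_norm_sq x \<le> Re (quad_form Cr x)"
  by (rule quad_form_ge_if_lambda_min_ge[OF Cr_carrier Cr_hermitian M_pos lambda_min_Cr])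

lemma mat_inv_Cr:
  "mat_inv Cr \<in> carrier_mat M M \<and> Cr * mat_inv Cr = 1\<^sub>m M \<and> mat_inv Cr * Cr = 1\<^sub>m M"
proof -
  have "fro_norm_sq (Cr - Cr) = 0"
    unfolding fro_norm_sq_def using Cr_carrier by simp
  hence "fro_norm_sq (Cr - Cr) \<le> \<theta>\<^sup>2/4" by simp
  from inverse_mat_if_close_to_pos_def[OF Cr_carrier Cr_carrier theta_pos Cr_quad_form_ge this]
  show ?thesis by (rule mat_inv_inverse[OF Cr_carrier])
qed

lemma mat_inv_Crhat:
  "mat_inv Crhat \<in> carrier_mat M M \<and> Crhat * mat_inv Crhat = 1\<^sub>m M \<and> mat_inv Crhat * Crhat = 1\<^sub>m M"
  by (rule mat_inv_inverse[OF Crhat_carrier inverse_mat_if_close_to_pos_def[OF Cr_carrier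
        Crhat_carrier theta_pos Cr_quad_form_ge fro_norm_sq_Cr_err_small]])

lemma sqrt_2_div_pi: "0 \<le> sqrt (2 / pi)" "sqrt (2 / pi) \<le> 1"
  using pi_gt3 by (auto simp: real_sqrt_le_1_iff)

lemma Chhat_carrier: "Chhat \<in> carrier_mat M M"
  unfolding Chhat_eq by (rule minus_carrier_mat) simp

lemma Chhat_entry: "k < M \<Longrightarrow> j < M \<Longrightarrow> Chhat$$(k,j) = Ch$$(k,j) + (Cyhat$$(k,j) - Cy$$(k,j))"
  unfolding Chhat_eq using Cyhat_carrier by (simp add: Cy_entry)

lemma adjoint_factor_entry:
  assumes "k < M" "j < M"
  shows "(Ch * mat_adjoint A)$$(k,j) = Ch$$(k,j) * complex_of_real (sqrt (2/pi) / sqrt (Re (Cy$$(j,j))))"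
    and "(Chhat * mat_adjoint Ahat)$$(k,j)
      = Chhat$$(k,j) * complex_of_real (sqrt (2/pi) / sqrt (Re (Cyhat$$(j,j))))"
  unfolding A_eq Ahat_eq
  by (rule mult_mat_adjoint_scaled_diag_inv_sqrt_entry[OF Cy_carrier Ch_carrier assms],
      rule mult_mat_adjoint_scaled_diag_inv_sqrt_entry[OF Cyhat_carrier Chhat_carrier assms])

lemma adjoint_factor_err_entry:
  assumes kj: "k < M" "j < M"
  shows "(cmod ((Chhat * mat_adjoint Ahat)$$(k,j) - (Ch * mat_adjoint A)$$(k,j)))\<^sup>2
    \<le> 4/\<theta> * (cmod (Cyhat$$(k,j) - Cy$$(k,j)))\<^sup>2 + 8 * \<epsilon>I\<^sup>2 / \<theta>^4 * (cmod (Cy$$(k,j)))\<^sup>2"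
proof -
  define s where "s = sqrt (2 / pi)"
  define dj where "dj = Re (Cy$$(j,j))"
  define hj where "hj = Re (Cyhat$$(j,j))"
  define a where "a = s / sqrt hj"
  define b where "b = s * (1 / sqrt hj - 1 / sqrt dj)"
  have s: "0 \<le> s" "s \<le> 1" unfolding s_def by (rule sqrt_2_div_pi)+
  have hj: "\<theta>/2 \<le> hj" unfolding hj_def by (rule Re_Cyhat_diag(2)[OF kj(2)])
  have eq: "(Chhat * mat_adjoint Ahat)$$(k,j) - (Ch * mat_adjoint A)$$(k,j)
      = (Cyhat$$(k,j) - Cy$$(k,j)) * of_real a + Ch$$(k,j) * of_real b"
    unfolding adjoint_factor_entry[OF kj] Chhat_entry[OF kj] a_def b_def s_def dj_def hj_def
    by (simp add: divide_inverse ring_distribs algebra_simps)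
  have "a\<^sup>2 = s\<^sup>2 / hj" unfolding a_def using hj theta_pos by (simp add: power_divide)
  also have "\<dots> \<le> 1 / (\<theta>/2)"
    using s hj theta_pos by (intro frac_le) (auto simp: power_le_one)
  finally have a: "a\<^sup>2 \<le> 2/\<theta>" by simp
  have "\<bar>1 / sqrt hj - 1 / sqrt dj\<bar> \<le> 2 * \<epsilon>I / \<theta>\<^sup>2"
    unfolding hj_def dj_def using theta_pos theta_less_1
    by (intro inv_sqrt_perturb Re_Cy_diag_ge[OF kj(2)] Re_Cyhat_diag(1)[OF kj(2)] epsI_budget(4)) auto
  hence "\<bar>b\<bar> \<le> 2 * \<epsilon>I / \<theta>\<^sup>2" unfolding b_def abs_mult using s
    by (metis abs_ge_zero abs_of_nonneg mult_left_le_one_le order_trans)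
  hence b: "b\<^sup>2 \<le> (2 * \<epsilon>I / \<theta>\<^sup>2)\<^sup>2" by (metis abs_ge_zero power2_abs power_mono)
  have "(cmod ((Chhat * mat_adjoint Ahat)$$(k,j) - (Ch * mat_adjoint A)$$(k,j)))\<^sup>2
      \<le> 2 * (cmod ((Cyhat$$(k,j) - Cy$$(k,j)) * of_real a))\<^sup>2 + 2 * (cmod (Ch$$(k,j) * of_real b))\<^sup>2"
    unfolding eq by (rule cmod_add_sq_le)
  also have "\<dots> = 2 * ((cmod (Cyhat$$(k,j) - Cy$$(k,j)))\<^sup>2 * a\<^sup>2) + 2 * ((cmod (Ch$$(k,j)))\<^sup>2 * b\<^sup>2)"
    by (simp add: norm_mult power_mult_distrib)
  also have "\<dots> \<le> 2 * ((cmod (Cyhat$$(k,j) - Cy$$(k,j)))\<^sup>2 * (2/\<theta>))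
      + 2 * ((cmod (Cy$$(k,j)))\<^sup>2 * (2 * \<epsilon>I / \<theta>\<^sup>2)\<^sup>2)"
    using a b power_mono[OF cmod_Ch_le_Cy[OF kj] norm_ge_zero, of 2]
    by (intro add_mono mult_left_mono mult_mono) auto
  also have "\<dots> = 4/\<theta> * (cmod (Cyhat$$(k,j) - Cy$$(k,j)))\<^sup>2 + 8 * \<epsilon>I\<^sup>2 / \<theta>^4 * (cmod (Cy$$(k,j)))\<^sup>2"
    by (simp add: power_mult_distrib power_divide field_simps eval_nat_numeral)
  finally show ?thesis .
qed

lemma fro_norm_sq_adjoint_factor_err:
  "fro_norm_sq (Chhat * mat_adjoint Ahat - Ch * mat_adjoint A) \<le> 5 * \<epsilon>F\<^sup>2 / \<theta>^4"
proof -
  have "fro_norm_sq (Chhat * mat_adjoint Ahat - Ch * mat_adjoint A) =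
      (\<Sum>k<M. \<Sum>j<M. (cmod ((Chhat * mat_adjoint Ahat)$$(k,j) - (Ch * mat_adjoint A)$$(k,j)))\<^sup>2)"
    unfolding fro_norm_sq_def using Chhat_carrier Ch_carrier
      mat_adjoint_scaled_diag_inv_sqrt_carrier[OF Cy_carrier]
      mat_adjoint_scaled_diag_inv_sqrt_carrier[OF Cyhat_carrier]
    by (auto simp: A_eq Ahat_eq intro!: sum.cong simp del: index_mult_mat(1))
  also have "\<dots> \<le> (\<Sum>k<M. \<Sum>j<M. 4/\<theta> * (cmod (Cyhat$$(k,j) - Cy$$(k,j)))\<^sup>2
      + 8 * \<epsilon>I\<^sup>2 / \<theta>^4 * (cmod (Cy$$(k,j)))\<^sup>2)"
    by (intro sum_mono adjoint_factor_err_entry) auto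
  also have "\<dots> = 4/\<theta> * (\<Sum>k<M. \<Sum>j<M. (cmod (Cyhat$$(k,j) - Cy$$(k,j)))\<^sup>2)
      + 8 / \<theta>^4 * (\<epsilon>I\<^sup>2 * fro_norm_sq Cy)"
    unfolding fro_norm_sq_def using Cy_carrier by (simp add: sum_distrib_left sum.distrib mult_ac)
  also have "\<dots> \<le> 4/\<theta> * \<epsilon>F\<^sup>2 + 8 / \<theta>^4 * (\<epsilon>F\<^sup>2 / 10000)"
    using err_fro_norm_sq epsI_budget(1) theta_pos by (intro add_mono mult_left_mono) auto
  also have "\<dots> \<le> 4/\<theta>^4 * \<epsilon>F\<^sup>2 + 8 / \<theta>^4 * (\<epsilon>F\<^sup>2 / 10000)"
    using theta_pos theta_less_1 power_decreasing[of 1 4 \<theta>]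
    by (intro add_mono mult_right_mono divide_left_mono) auto
  also have "\<dots> \<le> 5 * \<epsilon>F\<^sup>2 / \<theta>^4" using theta_pos by (simp add: field_simps)
  finally show ?thesis .
qed

lemma vec_norm_sq_mult_solution_le:
  assumes u: "u \<in> carrier_vec M"
  shows "vec_norm_sq ((Ch * mat_adjoint A * mat_inv Cr) *\<^sub>v u) \<le> (op_norm Ch)\<^sup>2 / \<theta>^3 * vec_norm_sq u"
proof -
  define G where "G = mat_inv Cr"
  have G: "G \<in> carrier_mat M M" "Cr * G = 1\<^sub>m M" using mat_inv_Cr unfolding G_def by auto
  have adjA: "mat_adjoint A \<in> carrier_mat M M"
    unfolding A_eq by (rule mat_adjoint_scaled_diag_inv_sqrt_carrier[OF Cy_carrier])
  have Gu: "G *\<^sub>v u \<in> carrier_vec M" using G u by simp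
  have "(Ch * mat_adjoint A * G) *\<^sub>v u = Ch *\<^sub>v (mat_adjoint A *\<^sub>v (G *\<^sub>v u))"
    using assoc_mult_mat_vec[OF mult_carrier_mat[OF Ch_carrier adjA] G(1) u]
      assoc_mult_mat_vec[OF Ch_carrier adjA Gu] by simp
  hence "vec_norm_sq ((Ch * mat_adjoint A * G) *\<^sub>v u)
      \<le> (op_norm Ch)\<^sup>2 * vec_norm_sq (mat_adjoint A *\<^sub>v (G *\<^sub>v u))"
    using vec_norm_sq_mult_le_op_norm[OF Ch_carrier, of "mat_adjoint A *\<^sub>v (G *\<^sub>v u)"] adjA Gu by simp
  also have "\<dots> \<le> (op_norm Ch)\<^sup>2 * (1/\<theta> * vec_norm_sq (G *\<^sub>v u))"
  proof (intro mult_left_mono vec_norm_sq_mult_diagonal_le[OF adjA _ _ Gu])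
    have e: "mat_adjoint A $$ (i,j) = (if i = j then complex_of_real (sqrt (2/pi) / sqrt (Re (Cy$$(i,i)))) else 0)"
      if "i < M" "j < M" for i j
      unfolding A_eq by (rule mat_adjoint_scaled_diag_inv_sqrt_entry[OF Cy_carrier that])
    show "mat_adjoint A $$ (i,j) = 0" if "i < M" "j < M" "i \<noteq> j" for i j using e that by simp
    show "(cmod (mat_adjoint A $$ (i,i)))\<^sup>2 \<le> 1/\<theta>" if i: "i < M" for i
    proof -
      have "(sqrt (2/pi) / sqrt (Re (Cy$$(i,i))))\<^sup>2 = (2/pi) / Re (Cy$$(i,i))"
        using Re_Cy_diag_ge[OF i] theta_pos by (simp add: power_divide)
      also have "\<dots> \<le> 1 / \<theta>"
        using Re_Cy_diag_ge[OF i] theta_pos pi_gt3 by (intro frac_le) auto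
      moreover have "0 \<le> Re (Cy$$(i,i))" using Re_Cy_diag_ge[OF i] theta_pos by linarith
      ultimately show ?thesis using e[OF i i] by (simp del: of_real_divide add: abs_of_nonneg)
    qed
  qed auto
  also have "\<dots> \<le> (op_norm Ch)\<^sup>2 * (1/\<theta> * (1/\<theta>\<^sup>2 * vec_norm_sq u))"
    using vec_norm_sq_mult_inverse_le[OF Cr_carrier G theta_pos Cr_quad_form_ge u] theta_pos
    by (intro mult_left_mono) auto
  also have "\<dots> = (op_norm Ch)\<^sup>2 / \<theta>^3 * vec_norm_sq u"
    by (simp add: field_simps power2_eq_square power3_eq_cube)
  finally show ?thesis unfolding G_def .
qed

lemma second_moment_error_bound:
  fixes P :: "'a measure" and r :: "'a \<Rightarrow> complex vec"
  assumes rc: "\<forall>\<omega>\<in>space P. r \<omega> \<in> carrier_vec M"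
    and meas: "\<forall>i<M. (\<lambda>\<omega>. r \<omega> $ i) \<in> borel_measurable P \<and> integrable P (\<lambda>\<omega>. (cmod (r \<omega> $ i))\<^sup>2)"
    and cov: "\<forall>i<M. \<forall>j<M. (LINT \<omega>|P. r \<omega> $ i * cnj (r \<omega> $ j)) = Cr $$ (i,j)"
  defines "X \<equiv> Ch * mat_adjoint A * mat_inv Cr" and "Xhat \<equiv> Chhat * mat_adjoint Ahat * mat_inv Crhat"
  shows "integrable P (\<lambda>\<omega>. (vec_norm (Xhat *\<^sub>v r \<omega> - X *\<^sub>v r \<omega>))\<^sup>2)"
    and "(LINT \<omega>|P. (vec_norm (Xhat *\<^sub>v r \<omega> - X *\<^sub>v r \<omega>))\<^sup>2)
      \<le> 20 * \<theta> powi (-6) * max 1 (op_norm Ch) * fro_norm Ch * \<epsilon>F"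
proof -
  have G: "mat_inv Cr \<in> carrier_mat M M" "mat_inv Cr * Cr = 1\<^sub>m M" using mat_inv_Cr by auto
  have Gh: "mat_inv Crhat \<in> carrier_mat M M" "mat_inv Crhat * Crhat = 1\<^sub>m M" using mat_inv_Crhat by auto
  have Y: "Ch * mat_adjoint A \<in> carrier_mat M M"
    unfolding A_eq using Ch_carrier mat_adjoint_scaled_diag_inv_sqrt_carrier[OF Cy_carrier] by simp
  have Yh: "Chhat * mat_adjoint Ahat \<in> carrier_mat M M"
    unfolding Ahat_eq using Chhat_carrier mat_adjoint_scaled_diag_inv_sqrt_carrier[OF Cyhat_carrier] by simp
  have X: "X \<in> carrier_mat M M" and Xh: "Xhat \<in> carrier_mat M M"
    unfolding X_def Xhat_def using Y Yh G Gh by auto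
  have pw: "(vec_norm (Xhat *\<^sub>v r \<omega> - X *\<^sub>v r \<omega>))\<^sup>2 = vec_norm_sq ((Xhat - X) *\<^sub>v r \<omega>)"
    if "\<omega> \<in> space P" for \<omega>
    using minus_mult_distrib_mat_vec[OF Xh X, of "r \<omega>"] rc that by (simp add: vec_norm_eq_sqrt)
  note second_moment = integral_vec_norm_sq_mult_mat_vec[OF rc meas cov minus_carrier_mat[OF X, of Xhat]]
  show "integrable P (\<lambda>\<omega>. (vec_norm (Xhat *\<^sub>v r \<omega> - X *\<^sub>v r \<omega>))\<^sup>2)"
    using second_moment(1) by (rule Bochner_Integration.integrable_cong[THEN iffD1, OF refl, rotated]) (simp add: pw)
  have "(LINT \<omega>|P. (vec_norm (Xhat *\<^sub>v r \<omega> - X *\<^sub>v r \<omega>))\<^sup>2) = (LINT \<omega>|P. vec_norm_sq ((Xhat - X) *\<^sub>v r \<omega>))"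
    by (rule Bochner_Integration.integral_cong) (simp_all add: pw)
  also have "\<dots> = (\<Sum>k<M. Re (quad_form Cr (vec M (\<lambda>j. cnj ((Xhat - X)$$(k,j))))))"
    by (rule second_moment(2))
  also have "\<dots> \<le> 8/\<theta> * (fro_norm_sq (Chhat * mat_adjoint Ahat - Ch * mat_adjoint A)
      + (\<Sum>k<M. vec_norm_sq ((Cr - Crhat) *\<^sub>v vec M (\<lambda>j. cnj (X$$(k,j))))))"
    unfolding X_def Xhat_def
    by (rule perturbed_solution_quad_form_le[OF theta_pos Cr_carrier Crhat_carrier G(1) Gh(1) Y Yh
          Cr_hermitian Crhat_hermitian Cr_quad_form_ge fro_norm_sq_Cr_err_small G(2) Gh(2)])
  also have "\<dots> \<le> 8/\<theta> * (5 * \<epsilon>F\<^sup>2 / \<theta>^4 + (op_norm Ch)\<^sup>2 / \<theta>^3 * (17 * \<epsilon>F\<^sup>2 / \<theta>^6))"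
  proof (intro mult_left_mono add_mono)
    have "(\<Sum>k<M. vec_norm_sq ((Cr - Crhat) *\<^sub>v vec M (\<lambda>j. cnj (X$$(k,j)))))
        \<le> (op_norm Ch)\<^sup>2 / \<theta>^3 * fro_norm_sq (Cr - Crhat)"
      by (rule sum_vec_norm_sq_mult_cnj_rows_le[OF minus_carrier_mat[OF Crhat_carrier] X])
        (use vec_norm_sq_mult_solution_le in \<open>simp add: X_def\<close>)
    also have "\<dots> \<le> (op_norm Ch)\<^sup>2 / \<theta>^3 * (17 * \<epsilon>F\<^sup>2 / \<theta>^6)"
      using fro_norm_sq_Cr_err theta_pos by (intro mult_left_mono) auto
    finally show "(\<Sum>k<M. vec_norm_sq ((Cr - Crhat) *\<^sub>v vec M (\<lambda>j. cnj (X$$(k,j)))))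
        \<le> (op_norm Ch)\<^sup>2 / \<theta>^3 * (17 * \<epsilon>F\<^sup>2 / \<theta>^6)" .
  qed (use fro_norm_sq_adjoint_factor_err theta_pos in auto)
  also have "\<dots> \<le> 20 * \<theta> powi (-6) * max 1 (op_norm Ch) * fro_norm Ch * \<epsilon>F"
    by (rule estimator_error_arith[OF theta_pos theta_less_1 epsF_pos op_norm_nonneg[OF Ch_carrier]
          op_norm_le_fro_norm[OF Ch_carrier] epsF_budget order_refl])
  finally show "(LINT \<omega>|P. (vec_norm (Xhat *\<^sub>v r \<omega> - X *\<^sub>v r \<omega>))\<^sup>2)
      \<le> 20 * \<theta> powi (-6) * max 1 (op_norm Ch) * fro_norm Ch * \<epsilon>F" .
qed

text \<open>Only the second moments of \<open>r\<close> enter.\<close>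
theorem estimator_error:
  "(\<forall>i<M. Re (Cyhat $$ (i,i)) > 0) \<and>
   (\<forall>i<M. \<forall>j<M.
      \<bar>Re (Cyhat $$ (i,j)) / (sqrt (Re (Cyhat $$ (i,i))) * sqrt (Re (Cyhat $$ (j,j))))\<bar> \<le> 1 \<and>
      \<bar>Im (Cyhat $$ (i,j)) / (sqrt (Re (Cyhat $$ (i,i))) * sqrt (Re (Cyhat $$ (j,j))))\<bar> \<le> 1) \<and>
   invertible_mat Crhat \<and>
   (\<forall>(P::complex vec measure) (r::complex vec \<Rightarrow> complex vec).
      (prob_space P \<and>
       (\<forall>\<omega>\<in>space P. r \<omega> \<in> carrier_vec M) \<and>
       (\<forall>i<M. (\<lambda>\<omega>. r \<omega> $ i) \<in> borel_measurable P \<and> integrable P (\<lambda>\<omega>. (cmod (r \<omega> $ i))\<^sup>2)) \<and>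
       (\<forall>i<M. \<forall>j<M. (LINT \<omega>|P. r \<omega> $ i * cnj (r \<omega> $ j)) = Cr $$ (i,j)))
      \<longrightarrow>
      (integrable P (\<lambda>\<omega>. (vec_norm ((Chhat * mat_adjoint Ahat * mat_inv Crhat) *\<^sub>v r \<omega>
          - (Ch * mat_adjoint A * mat_inv Cr) *\<^sub>v r \<omega>))\<^sup>2) \<and>
       (LINT \<omega>|P. (vec_norm ((Chhat * mat_adjoint Ahat * mat_inv Crhat) *\<^sub>v r \<omega>
          - (Ch * mat_adjoint A * mat_inv Cr) *\<^sub>v r \<omega>))\<^sup>2)
         \<le> 20 * \<theta> powi (-6) * max 1 (op_norm Ch) * fro_norm Ch * \<epsilon>F))"
proof (intro conjI allI impI)
  show "Re (Cyhat $$ (i,i)) > 0" if "i < M" for i using Re_Cyhat_diag(2)[OF that] theta_pos by linarith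
  fix i j assume ij: "i < M" "j < M"
  show "\<bar>Re (Cyhat $$ (i,j)) / (sqrt (Re (Cyhat $$ (i,i))) * sqrt (Re (Cyhat $$ (j,j))))\<bar> \<le> 1"
    "\<bar>Im (Cyhat $$ (i,j)) / (sqrt (Re (Cyhat $$ (i,i))) * sqrt (Re (Cyhat $$ (j,j))))\<bar> \<le> 1"
    using normalized_entry_le_1(2)[OF ij] abs_Re_le_cmod abs_Im_le_cmod order_trans
    unfolding normalized_entry_def by fastforce+
next
  show "invertible_mat Crhat"
    unfolding invertible_mat_def inverts_mat_def using mat_inv_Crhat Crhat_carrier by auto
next
  fix P :: "complex vec measure" and r :: "complex vec \<Rightarrow> complex vec"
  assume "prob_space P \<and> (\<forall>\<omega>\<in>space P. r \<omega> \<in> carrier_vec M) \<and>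
    (\<forall>i<M. (\<lambda>\<omega>. r \<omega> $ i) \<in> borel_measurable P \<and> integrable P (\<lambda>\<omega>. (cmod (r \<omega> $ i))\<^sup>2)) \<and>
    (\<forall>i<M. \<forall>j<M. (LINT \<omega>|P. r \<omega> $ i * cnj (r \<omega> $ j)) = Cr $$ (i,j))"
  thus "integrable P (\<lambda>\<omega>. (vec_norm ((Chhat * mat_adjoint Ahat * mat_inv Crhat) *\<^sub>v r \<omega>
          - (Ch * mat_adjoint A * mat_inv Cr) *\<^sub>v r \<omega>))\<^sup>2)"
    "(LINT \<omega>|P. (vec_norm ((Chhat * mat_adjoint Ahat * mat_inv Crhat) *\<^sub>v r \<omega>
          - (Ch * mat_adjoint A * mat_inv Cr) *\<^sub>v r \<omega>))\<^sup>2)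
         \<le> 20 * \<theta> powi (-6) * max 1 (op_norm Ch) * fro_norm Ch * \<epsilon>F"
    using second_moment_error_bound by auto
qed

end

theorem lemma1:
  shows "\<exists>c1 c2 C :: real. c1 > 0 \<and> c2 > 0 \<and> C > 0 \<and>
    (\<forall>(M::nat) (N0::real) (Ch::complex mat) (Cyhat::complex mat) (\<theta>::real) (\<epsilon>F::real) (\<epsilon>I::real).
      let Cy = Ch + complex_of_real N0 \<cdot>\<^sub>m 1\<^sub>m M;
          Cr = P_arcsine Cy;
          A = complex_of_real (sqrt (2 / pi)) \<cdot>\<^sub>m diag_inv_sqrt Cy;
          Chhat = Cyhat - complex_of_real N0 \<cdot>\<^sub>m 1\<^sub>m M;
          Ahat = complex_of_real (sqrt (2 / pi)) \<cdot>\<^sub>m diag_inv_sqrt Cyhat;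
          Crhat = P_arcsine Cyhat
      in
      (N0 > 0 \<and> Ch \<in> carrier_mat M M \<and> psd_mat Ch \<and>
       0 < \<theta> \<and> \<theta> < 1 \<and>
       (\<forall>i<M. \<forall>j<M. i \<noteq> j \<longrightarrow>
          cmod ((diag_inv_sqrt Cy * Cy * diag_inv_sqrt Cy) $$ (i,j)) \<le> 1 - \<theta>) \<and>
       (\<forall>i<M. cmod (Cy $$ (i,i)) \<ge> \<theta>) \<and>
       lambda_min Cr \<ge> \<theta> \<and>
       Cyhat \<in> carrier_mat M M \<and> hermitian_mat Cyhat \<and>
       \<epsilon>F > 0 \<and> \<epsilon>I > 0 \<and>
       fro_norm (Cyhat - Cy) < \<epsilon>F \<and> max_norm (Cyhat - Cy) < \<epsilon>I \<and>
       \<epsilon>I \<le> c1 * Min {\<epsilon>F / fro_norm Cy, \<theta> ^ 3 / max_norm Cy, \<theta>, 1} \<and>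
       \<epsilon>F \<le> c2 * min (\<theta> ^ 4) (\<theta> ^ 6 * fro_norm Ch / (max 1 (op_norm Ch) * op_norm Cy)))
      \<longrightarrow>
      ((\<forall>i<M. Re (Cyhat $$ (i,i)) > 0) \<and>
       (\<forall>i<M. \<forall>j<M.
          \<bar>Re (Cyhat $$ (i,j)) / (sqrt (Re (Cyhat $$ (i,i))) * sqrt (Re (Cyhat $$ (j,j))))\<bar> \<le> 1 \<and>
          \<bar>Im (Cyhat $$ (i,j)) / (sqrt (Re (Cyhat $$ (i,i))) * sqrt (Re (Cyhat $$ (j,j))))\<bar> \<le> 1) \<and>
       invertible_mat Crhat \<and>
       (\<forall>(P::complex vec measure) (r::complex vec \<Rightarrow> complex vec).
          (prob_space P \<and>
           (\<forall>\<omega>\<in>space P. r \<omega> \<in> carrier_vec M) \<and>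
           (\<forall>i<M. (\<lambda>\<omega>. r \<omega> $ i) \<in> borel_measurable P \<and>
                   integrable P (\<lambda>\<omega>. (cmod (r \<omega> $ i))\<^sup>2)) \<and>
           (\<forall>i<M. \<forall>j<M. (LINT \<omega>|P. r \<omega> $ i * cnj (r \<omega> $ j)) = Cr $$ (i,j)))
          \<longrightarrow>
          (let hBLM = (\<lambda>\<omega>. (Ch * mat_adjoint A * mat_inv Cr) *\<^sub>v r \<omega>);
               hhat = (\<lambda>\<omega>. (Chhat * mat_adjoint Ahat * mat_inv Crhat) *\<^sub>v r \<omega>)
           in integrable P (\<lambda>\<omega>. (vec_norm (hhat \<omega> - hBLM \<omega>))\<^sup>2) \<and>
              (LINT \<omega>|P. (vec_norm (hhat \<omega> - hBLM \<omega>))\<^sup>2)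
                \<le> C * \<theta> powi (-6) * max 1 (op_norm Ch) * fro_norm Ch * \<epsilon>F))))"
  unfolding Let_def
  apply (rule exI[of _ "1/100"], rule exI[of _ "1/20"], rule exI[of _ "20::real"], intro conjI)
     apply simp_all[3]
  apply (intro allI impI)
  subgoal for M N0 Ch Cyhat \<theta> \<epsilon>F \<epsilon>I
    by (rule arcsine_estimator_perturbation.estimator_error[of M N0 \<theta> \<epsilon>F \<epsilon>I], unfold_locales) auto
  done

end
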